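(* Assume $\mathrm{char}(\mathcal{O}/\mathfrak{p})\neq 2$, and let $k,n\ge1$. Let $G$ be a group with $\mathrm{Hei}_{2k+1}(\mathcal{O}/\mathfrak{p}^n)\subseteq G\subseteq \mathbf{U}_{k+2}(\mathcal{O}/\mathfrak{p}^n)$. Then $m_{\mathsf{faithful}}(G)=m_{\mathsf{faithful}}\big(\mathrm{Hei}_{2k+1}(\mathcal{O}/\mathfrak{p}^n)\big)$.
   Context: For a finite group $G$, $m_{\mathsf{faithful}}(G)$ denotes the smallest dimension of a faithful complex representation of $G$. $F$ is a non-Archimedean local field with ring of integers $\mathcal{O}$ and maximal ideal $\mathfrak{p}$. For a commutative unital ring $R$, $\mathbf{U}_{m}(R)\subseteq \mathrm{GL}_m(R)$ is the group of upper unitriangular $m\times m$ matrices, and the Heisenberg group $\mathrm{Hei}_{2k+1}(R)$ is the subgroup of $\mathbf{U}_{k+2}(R)$ consisting of the matrices $\begin{pmatrix}1&\mathbf{x}&z\\0&I_k&\mathbf{y}^T\\0&0&1\end{pmatrix}$ with $\mathbf{x},\mathbf{y}\in R^k$, $z\in R$. *)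

theory Defs
  imports "Jordan_Normal_Form.Matrix" "HOL-Algebra.Group"
begin

definition GL_mat :: "nat \<Rightarrow> complex mat monoid" where
  "GL_mat d = \<lparr> carrier = {A \<in> carrier_mat d d. invertible_mat A},
                mult = (\<lambda>A B. A * B), one = 1\<^sub>m d \<rparr>"

definition faithful_rep :: "('g, 'b) monoid_scheme \<Rightarrow> nat \<Rightarrow> ('g \<Rightarrow> complex mat) \<Rightarrow> bool" where
  "faithful_rep G d \<rho> \<longleftrightarrow> \<rho> \<in> hom G (GL_mat d) \<and> inj_on \<rho> (carrier G)"

definition m_faithful :: "('g, 'b) monoid_scheme \<Rightarrow> nat" where
  "m_faithful G = (LEAST d. \<exists>\<rho>. faithful_rep G d \<rho>)"

definition U_mat :: "nat \<Rightarrow> ('a::comm_ring_1) mat monoid" where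
  "U_mat m = \<lparr> carrier = {A \<in> carrier_mat m m. (\<forall>i<m. A $$ (i,i) = 1) \<and>
                                  (\<forall>i<m. \<forall>j<i. A $$ (i,j) = 0)},
               mult = (\<lambda>A B. A * B), one = 1\<^sub>m m \<rparr>"

text \<open>Heisenberg group Hei_{2k+1}(R) inside U_{k+2}(R): the unitriangular matrices whose
  middle k x k block (rows/columns 1..k, 0-based) is the identity.\<close>
definition Hei_set :: "nat \<Rightarrow> ('a::comm_ring_1) mat set" where
  "Hei_set k = {A \<in> carrier (U_mat (k+2)). \<forall>i j. 1 \<le> i \<and> i < j \<and> j \<le> k \<longrightarrow> A $$ (i,j) = 0}"

definition Hei_group :: "nat \<Rightarrow> ('a::comm_ring_1) mat monoid" where
  "Hei_group k = (U_mat (k+2)) \<lparr> carrier := Hei_set k \<rparr>"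

text \<open>Finite commutative local ring with principal maximal ideal (finite chain ring),
  i.e. the rings O/p^n for O the integers of a non-Archimedean local field and n \<ge> 1.
  The maximal ideal is the set of non-units.\<close>
definition finite_chain_ring :: "'a::comm_ring_1 itself \<Rightarrow> bool" where
  "finite_chain_ring _ \<longleftrightarrow> finite (UNIV :: 'a set) \<and> (0::'a) \<noteq> 1 \<and>
     (\<exists>\<pi>::'a. \<forall>x. (\<not> x dvd 1) \<longleftrightarrow> \<pi> dvd x)"

end

theory Submission
  imports Defs "Jordan_Normal_Form.VS_Connect" "Jordan_Normal_Form.Determinant"
begin

text \<open>
  Let \<open>\<rho>\<close> be a faithful representation of \<open>Hei\<close> of dimension \<open>d\<close>, and let \<open>A \<cong> R^(k+1)\<close> be
  the abelian normal subgroup of matrices supported on the diagonal and the last column. The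
  matrices \<open>\<rho>(A)\<close> commute and have finite order, so they are simultaneously diagonalisable;
  there are at most \<open>d\<close> joint eigencharacters, and by faithfulness the central characters
  occurring among them separate the points of the centre \<open>Z \<cong> R\<close>.

  For such a central character \<open>\<chi>\<close> and a row vector \<open>w\<close> with \<open>w\<^sub>0 = 1\<close>, the character
  \<open>\<psi>(u) = \<chi>(w \<cdot> u)\<close> of \<open>A \<cong> R^(k+1)\<close>, multiplied by a character of \<open>A/Z\<close> that depends only
  on \<open>\<chi>\<close>, is the conjugate of a joint eigencharacter by an element of \<open>Hei\<close>. Distinct \<open>\<psi>\<close>
  give distinct joint eigencharacters, so there are at most \<open>d\<close> such characters. Any
  \<open>G \<subseteq> U\<^sub>k\<^sub>+\<^sub>2(R)\<close> permutes them through the upper left \<open>(k+1) \<times> (k+1)\<close> block of its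
  elements, and the last column provides a cocycle; the resulting monomial representation of
  \<open>G\<close> has dimension at most \<open>d\<close> and is faithful because the central characters separate \<open>Z\<close>.
  The reverse inequality is restriction to \<open>Hei \<subseteq> G\<close>.
\<close>


lemma index_mult_mat_sum:
  assumes "A \<in> carrier_mat n m" "B \<in> carrier_mat m p" "i < n" "j < p"
  shows "(A * B) $$ (i,j) = (\<Sum>l<m. A $$ (i,l) * B $$ (l,j))"
  using assms by (simp add: scalar_prod_def lessThan_atLeast0)

lemma finite_carrier_mat:
  assumes "finite (UNIV :: 'a set)"
  shows "finite (carrier_mat n m :: 'a::zero mat set)"
proof -
  let ?F = "{f :: nat \<times> nat \<Rightarrow> 'a. \<forall>p. p \<notin> {..<n} \<times> {..<m} \<longrightarrow> f p = 0}"
  have "finite ?F"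
    using finite_set_of_finite_funs[of "{..<n} \<times> {..<m}" UNIV 0] assms by simp
  moreover have "carrier_mat n m \<subseteq> (\<lambda>f. mat n m f) ` ?F"
  proof
    fix A :: "'a mat" assume A: "A \<in> carrier_mat n m"
    then have "A = mat n m (\<lambda>p. if p \<in> {..<n} \<times> {..<m} then A $$ p else 0)"
      by (intro eq_matI) auto
    then show "A \<in> (\<lambda>f. mat n m f) ` ?F" by force
  qed
  ultimately show ?thesis using finite_surj by blast
qed

lemma nonzero_vec_index:
  assumes "v \<in> carrier_vec d" "v \<noteq> 0\<^sub>v d"
  obtains r where "r < d" "v $ r \<noteq> 0"
proof -
  have "v \<noteq> 0\<^sub>v d \<Longrightarrow> \<exists>r<d. v $ r \<noteq> 0"
    using assms(1) by (auto intro!: eq_vecI)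
  then show thesis using assms(2) that by blast
qed

lemma smult_vec_right_cancel:
  fixes v :: "'a::field vec"
  assumes "v \<in> carrier_vec d" "v \<noteq> 0\<^sub>v d" "\<alpha> \<cdot>\<^sub>v v = \<beta> \<cdot>\<^sub>v v"
  shows "\<alpha> = \<beta>"
proof -
  obtain r where r: "r < d" "v $ r \<noteq> 0" using nonzero_vec_index[OF assms(1,2)] .
  have "\<alpha> * v $ r = \<beta> * v $ r" using arg_cong[OF assms(3), of "\<lambda>u. u $ r"] r assms(1) by simp
  then show ?thesis using r by simp
qed

lemma invertible_mat_inverse:
  assumes P: "P \<in> carrier_mat d d" and "invertible_mat P"
  obtains Q where "Q \<in> carrier_mat d d" "P * Q = 1\<^sub>m d" "Q * P = 1\<^sub>m d"
proof -
  obtain Q where Q: "P * Q = 1\<^sub>m (dim_row P)" "Q * P = 1\<^sub>m (dim_row Q)"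
    using assms(2) unfolding invertible_mat_def inverts_mat_def by blast
  have "dim_col Q = d" using arg_cong[OF Q(1), of dim_col] P by simp
  moreover have "dim_row Q = d" using arg_cong[OF Q(2), of dim_col] P by simp
  ultimately show thesis using that Q P by auto
qed

lemma mult_pow_mat_commute:
  fixes A B :: "'a::semiring_1 mat"
  assumes A: "A \<in> carrier_mat d d" and B: "B \<in> carrier_mat d d" and AB: "A * B = B * A"
  shows "A * B ^\<^sub>m i = B ^\<^sub>m i * A"
proof (induction i)
  case (Suc i)
  have Bi: "B ^\<^sub>m i \<in> carrier_mat d d" using B by simp
  have "A * B ^\<^sub>m Suc i = (A * B ^\<^sub>m i) * B" using A B Bi by (simp add: assoc_mult_mat[OF A Bi B])
  also have "\<dots> = B ^\<^sub>m i * (B * A)" using Suc A B Bi AB by (simp add: assoc_mult_mat[OF Bi A B])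
  also have "\<dots> = B ^\<^sub>m Suc i * A" using A B Bi by (simp add: assoc_mult_mat[OF Bi B A])
  finally show ?case .
qed (use A B in simp)

lemma mult_mat_vec_zero_right: "A \<in> carrier_mat n m \<Longrightarrow> A *\<^sub>v 0\<^sub>v m = 0\<^sub>v n"
  by (intro eq_vecI) (simp_all add: scalar_prod_def)

lemma mult_mat_vec_lincomb:
  fixes A :: "'a::comm_semiring_1 mat"
  assumes "A \<in> carrier_mat d d" "\<And>j. j \<in> J \<Longrightarrow> X j \<in> carrier_vec d" "r < d"
  shows "(A *\<^sub>v vec d (\<lambda>r. \<Sum>j\<in>J. c j * X j $ r)) $ r = (\<Sum>j\<in>J. c j * (A *\<^sub>v X j) $ r)"
proof -
  have "(A *\<^sub>v vec d (\<lambda>r. \<Sum>j\<in>J. c j * X j $ r)) $ r = (\<Sum>i<d. A $$ (r,i) * (\<Sum>j\<in>J. c j * X j $ i))"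
    using assms by (simp add: scalar_prod_def lessThan_atLeast0)
  also have "\<dots> = (\<Sum>j\<in>J. c j * (\<Sum>i<d. A $$ (r,i) * X j $ i))"
    by (simp add: sum_distrib_left sum.swap[of _ J] mult.left_commute)
  also have "\<dots> = (\<Sum>j\<in>J. c j * (A *\<^sub>v X j) $ r)"
  proof (intro sum.cong refl)
    fix j assume "j \<in> J"
    then have "dim_vec (X j) = d" using assms(2) by (simp add: carrier_vecD)
    then show "c j * (\<Sum>i<d. A $$ (r,i) * X j $ i) = c j * (A *\<^sub>v X j) $ r"
      using assms(1,3) by (simp add: scalar_prod_def lessThan_atLeast0)
  qed
  finally show ?thesis .
qed

lemma carrier_U_mat:
  "A \<in> carrier (U_mat m) \<longleftrightarrow>
     A \<in> carrier_mat m m \<and> (\<forall>i<m. A $$ (i,i) = 1) \<and> (\<forall>i<m. \<forall>j<i. A $$ (i,j) = 0)"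
  by (simp add: U_mat_def)

lemma U_matD:
  assumes "A \<in> carrier (U_mat m)"
  shows "A \<in> carrier_mat m m" "\<And>i. i < m \<Longrightarrow> A $$ (i,i) = 1"
    "\<And>i j. i < m \<Longrightarrow> j < i \<Longrightarrow> A $$ (i,j) = 0"
  using assms unfolding carrier_U_mat by auto

lemma U_mat_mult: "A \<otimes>\<^bsub>U_mat m\<^esub> B = A * B"
  and U_mat_one: "\<one>\<^bsub>U_mat m\<^esub> = 1\<^sub>m m"
  by (simp_all add: U_mat_def)

lemma U_mat_mult_closed:
  assumes A: "A \<in> carrier (U_mat m)" and B: "B \<in> carrier (U_mat m)"
  shows "A * B \<in> carrier (U_mat m)"
proof -
  note Ac = U_matD(1)[OF A] and Bc = U_matD(1)[OF B]
  have vanish: "A $$ (i,l) * B $$ (l,j) = 0" if "i < m" "l < m" "j \<le> i" "l \<noteq> i \<or> j \<noteq> i" for i j l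
    using U_matD(3)[OF A, of i l] U_matD(3)[OF B, of l j] that by (cases "l < i") auto
  have "(A * B) $$ (i,j) = (if i = j then 1 else 0)" if i: "i < m" and ji: "j \<le> i" for i j
  proof -
    have "(A * B) $$ (i,j) = (\<Sum>l<m. if l = i \<and> j = i then A $$ (i,i) * B $$ (i,i) else 0)"
      unfolding index_mult_mat_sum[OF Ac Bc i order.strict_trans1[OF ji i]]
    proof (intro sum.cong refl)
      fix l assume "l \<in> {..<m}"
      then show "A $$ (i,l) * B $$ (l,j) = (if l = i \<and> j = i then A $$ (i,i) * B $$ (i,i) else 0)"
        using vanish[OF i _ ji, of l] by (cases "l = i \<and> j = i") auto
    qed
    then show ?thesis using i U_matD(2)[OF A] U_matD(2)[OF B] by auto
  qed
  then show ?thesis using Ac Bc unfolding carrier_U_mat by auto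
qed

lemma det_U_mat:
  assumes A: "A \<in> carrier (U_mat m)"
  shows "det A = 1"
proof -
  have "upper_triangular A" using U_matD[OF A] by auto
  moreover have "diag_mat A = replicate m 1"
    using U_matD[OF A] by (intro nth_equalityI) (auto simp: diag_mat_def)
  ultimately show ?thesis using det_upper_triangular[OF _ U_matD(1)[OF A]] by simp
qed

lemma finite_carrier_U_mat:
  assumes "finite (UNIV :: 'a set)"
  shows "finite (carrier (U_mat m :: 'a::comm_ring_1 mat monoid))"
  using finite_carrier_mat[OF assms, of m m] by (rule rev_finite_subset) (auto simp: carrier_U_mat)

lemma group_U_mat:
  assumes fin: "finite (UNIV :: 'a set)"
  shows "group (U_mat m :: 'a::comm_ring_1 mat monoid)"
proof (rule groupI)
  let ?C = "carrier (U_mat m) :: 'a mat set"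
  show "\<exists>y\<in>?C. y \<otimes>\<^bsub>U_mat m\<^esub> x = \<one>\<^bsub>U_mat m\<^esub>" if x: "x \<in> ?C" for x
  proof -
    have xc: "x \<in> carrier_mat m m" using U_matD(1)[OF x] .
    have adj: "x * adj_mat x = 1\<^sub>m m" "adj_mat x \<in> carrier_mat m m"
      using adj_mat[OF xc] det_U_mat[OF x] by auto
    have "(\<lambda>y. y * x) ` ?C \<subseteq> ?C" using U_mat_mult_closed[OF _ x] by auto
    moreover have "inj_on (\<lambda>y. y * x) ?C"
    proof
      fix y z assume y: "y \<in> ?C" and z: "z \<in> ?C" and eq: "y * x = z * x"
      have "y = y * x * adj_mat x"
        using adj xc U_matD(1)[OF y] by (simp add: assoc_mult_mat[of y m m x m])
      also have "\<dots> = z" 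
        using adj xc U_matD(1)[OF z] by (simp add: eq assoc_mult_mat[of z m m x m])
      finally show "y = z" .
    qed
    ultimately have "(\<lambda>y. y * x) ` ?C = ?C" by (rule endo_inj_surj[OF finite_carrier_U_mat[OF fin]])
    moreover have "1\<^sub>m m \<in> ?C" by (auto simp: carrier_U_mat)
    ultimately obtain y where "y \<in> ?C" "y * x = 1\<^sub>m m" by (metis imageE)
    then show ?thesis by (auto simp: U_mat_def)
  qed
  show "x \<otimes>\<^bsub>U_mat m\<^esub> y \<otimes>\<^bsub>U_mat m\<^esub> z = x \<otimes>\<^bsub>U_mat m\<^esub> (y \<otimes>\<^bsub>U_mat m\<^esub> z)"
    if "x \<in> ?C" "y \<in> ?C" "z \<in> ?C" for x y z
    using that by (simp add: U_mat_def assoc_mult_mat[of x m m y m z m])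
  show "x \<otimes>\<^bsub>U_mat m\<^esub> y \<in> ?C" if "x \<in> ?C" "y \<in> ?C" for x y
    using U_mat_mult_closed[OF that] by (simp add: U_mat_def)
  show "\<one>\<^bsub>U_mat m\<^esub> \<in> ?C" by (auto simp: U_mat_def)
  show "\<one>\<^bsub>U_mat m\<^esub> \<otimes>\<^bsub>U_mat m\<^esub> x = x" if "x \<in> ?C" for x
    using that by (auto simp: U_mat_def)
qed

lemma U_mat_mult_index_block:
  assumes g: "g \<in> carrier (U_mat (Suc m))" and h: "h \<in> carrier (U_mat (Suc m))"
    and i: "i < Suc m" and j: "j < Suc m"
  shows "(g * h) $$ (i,j) = (\<Sum>l<m. g $$ (i,l) * h $$ (l,j)) + (if j = m then g $$ (i,m) else 0)"
proof -
  have "h $$ (m,j) = (if j = m then 1 else 0)" using U_matD(2,3)[OF h, of m] j by auto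
  then show ?thesis
    unfolding index_mult_mat_sum[OF U_matD(1)[OF g] U_matD(1)[OF h] i j] by simp
qed

lemma U_mat_eqI:
  assumes g: "g \<in> carrier (U_mat (Suc m))" and h: "h \<in> carrier (U_mat (Suc m))"
    and rows: "\<And>i j. i < m \<Longrightarrow> j < Suc m \<Longrightarrow> g $$ (i,j) = h $$ (i,j)"
  shows "g = h"
proof (rule eq_matI)
  fix i j assume "i < dim_row h" "j < dim_col h"
  then have i: "i < Suc m" and j: "j < Suc m" using U_matD(1)[OF h] by auto
  show "g $$ (i,j) = h $$ (i,j)"
  proof (cases "i < m")
    case False
    then have "i = m" using i by simp
    then show ?thesis using U_matD(2,3)[OF g i] U_matD(2,3)[OF h i] j by (cases "j = m") auto
  qed (use rows j in blast)
qed (use U_matD(1)[OF g] U_matD(1)[OF h] in auto)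

section \<open>Monomial representations\<close>

locale monomial_action = group G for G :: "('g, 'b) monoid_scheme" +
  fixes T :: "'t set" and act :: "'t \<Rightarrow> 'g \<Rightarrow> 't" and cocycle :: "'t \<Rightarrow> 'g \<Rightarrow> complex"
  assumes finite_T: "finite T"
    and act_closed: "t \<in> T \<Longrightarrow> g \<in> carrier G \<Longrightarrow> act t g \<in> T"
    and act_mult: "t \<in> T \<Longrightarrow> g \<in> carrier G \<Longrightarrow> h \<in> carrier G \<Longrightarrow>
      act t (g \<otimes>\<^bsub>G\<^esub> h) = act (act t g) h"
    and act_one: "t \<in> T \<Longrightarrow> act t \<one>\<^bsub>G\<^esub> = t"
    and cocycle_mult: "t \<in> T \<Longrightarrow> g \<in> carrier G \<Longrightarrow> h \<in> carrier G \<Longrightarrow>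
      cocycle t (g \<otimes>\<^bsub>G\<^esub> h) = cocycle t g * cocycle (act t g) h"
    and cocycle_one: "t \<in> T \<Longrightarrow> cocycle t \<one>\<^bsub>G\<^esub> = 1"
begin

definition enum :: "nat \<Rightarrow> 't" where
  "enum = (SOME e. bij_betw e {0..<card T} T)"

lemma bij_enum: "bij_betw enum {0..<card T} T"
  unfolding enum_def using ex_bij_betw_nat_finite[OF finite_T] by (rule someI_ex)

lemma enum_in: "i < card T \<Longrightarrow> enum i \<in> T"
  using bij_enum by (auto simp: bij_betw_def)

lemma enum_eq_iff: "i < card T \<Longrightarrow> j < card T \<Longrightarrow> enum i = enum j \<longleftrightarrow> i = j"
  using bij_enum by (auto simp: bij_betw_def inj_on_def)

lemma enum_surj:
  assumes "t \<in> T" obtains i where "i < card T" "enum i = t"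
  using assms bij_enum by (metis atLeastLessThan_iff bij_betw_iff_bijections)

definition monomial_mat :: "'g \<Rightarrow> complex mat" where
  "monomial_mat g = mat (card T) (card T) (\<lambda>(i,j). if enum j = act (enum i) g then cocycle (enum i) g else 0)"

lemma monomial_mat_carrier: "monomial_mat g \<in> carrier_mat (card T) (card T)"
  by (simp add: monomial_mat_def)

lemma monomial_mat_mult:
  assumes g: "g \<in> carrier G" and h: "h \<in> carrier G"
  shows "monomial_mat g * monomial_mat h = monomial_mat (g \<otimes>\<^bsub>G\<^esub> h)"
proof (rule eq_matI)
  fix i j assume "i < dim_row (monomial_mat (g \<otimes>\<^bsub>G\<^esub> h))" "j < dim_col (monomial_mat (g \<otimes>\<^bsub>G\<^esub> h))"
  then have i: "i < card T" and j: "j < card T" by (auto simp: monomial_mat_def)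
  let ?s = "act (enum i) g"
  define F where
    "F s = (if s = ?s then cocycle (enum i) g * (if enum j = act s h then cocycle s h else 0) else 0)" for s
  have "(monomial_mat g * monomial_mat h) $$ (i,j) = (\<Sum>l\<in>{0..<card T}. F (enum l))"
    unfolding index_mult_mat_sum[OF monomial_mat_carrier monomial_mat_carrier i j]
    by (rule sum.cong) (auto simp: monomial_mat_def F_def i j)
  also have "\<dots> = (\<Sum>s\<in>T. F s)" by (rule sum.reindex_bij_betw[OF bij_enum])
  also have "\<dots> = cocycle (enum i) g * (if enum j = act ?s h then cocycle ?s h else 0)"
    unfolding F_def using act_closed[OF enum_in[OF i] g] finite_T by (simp add: sum.delta)
  also have "\<dots> = monomial_mat (g \<otimes>\<^bsub>G\<^esub> h) $$ (i,j)"
    using i j act_mult[OF enum_in[OF i] g h] cocycle_mult[OF enum_in[OF i] g h]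
    by (simp add: monomial_mat_def)
  finally show "(monomial_mat g * monomial_mat h) $$ (i,j) = monomial_mat (g \<otimes>\<^bsub>G\<^esub> h) $$ (i,j)" .
qed (auto simp: monomial_mat_def)

lemma monomial_mat_one: "monomial_mat \<one>\<^bsub>G\<^esub> = 1\<^sub>m (card T)"
  by (rule eq_matI) (auto simp: monomial_mat_def act_one cocycle_one enum_in enum_eq_iff)

lemma monomial_mat_hom: "monomial_mat \<in> hom G (GL_mat (card T))"
proof -
  have "invertible_mat (monomial_mat g)" if g: "g \<in> carrier G" for g
  proof -
    have "monomial_mat g * monomial_mat (inv\<^bsub>G\<^esub> g) = 1\<^sub>m (card T)"
      "monomial_mat (inv\<^bsub>G\<^esub> g) * monomial_mat g = 1\<^sub>m (card T)"
      using monomial_mat_mult[OF g inv_closed[OF g]] monomial_mat_mult[OF inv_closed[OF g] g] g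
      by (simp_all add: monomial_mat_one)
    then show ?thesis
      unfolding invertible_mat_def inverts_mat_def by (auto simp: monomial_mat_def)
  qed
  then show ?thesis
    unfolding hom_def GL_mat_def using monomial_mat_carrier monomial_mat_mult by auto
qed

lemma cocycle_nonzero: "t \<in> T \<Longrightarrow> g \<in> carrier G \<Longrightarrow> cocycle t g \<noteq> 0"
  using cocycle_mult[of t g "inv\<^bsub>G\<^esub> g"] cocycle_one by auto

lemma faithful_rep_monomial_mat:
  assumes separating: "\<And>g h. g \<in> carrier G \<Longrightarrow> h \<in> carrier G \<Longrightarrow>
      (\<forall>t\<in>T. act t g = act t h \<and> cocycle t g = cocycle t h) \<Longrightarrow> g = h"
  shows "faithful_rep G (card T) monomial_mat"
  unfolding faithful_rep_def
proof (intro conjI monomial_mat_hom inj_onI)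
  fix g h assume g: "g \<in> carrier G" and h: "h \<in> carrier G" and eq: "monomial_mat g = monomial_mat h"
  show "g = h"
  proof (rule separating[OF g h], intro ballI)
    fix t assume t: "t \<in> T"
    obtain i j where i: "i < card T" "enum i = t" and j: "j < card T" "enum j = act t g"
      using enum_surj[OF t] enum_surj[OF act_closed[OF t g]] by metis
    have "(if act t g = act t h then cocycle t h else 0) = cocycle t g"
      using arg_cong[OF eq, of "\<lambda>M. M $$ (i,j)"] i j by (simp add: monomial_mat_def)
    then show "act t g = act t h \<and> cocycle t g = cocycle t h"
      using cocycle_nonzero[OF t g] by (auto split: if_splits)
  qed
qed

end

lemma (in group) faithful_rep_exists:
  assumes "finite (carrier G)"
  shows "\<exists>\<rho>. faithful_rep G (card (carrier G)) \<rho>"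
proof -
  interpret monomial_action G "carrier G" "\<lambda>t g. t \<otimes> g" "\<lambda>_ _. 1"
    by unfold_locales (auto simp: assms m_assoc)
  have "faithful_rep G (card (carrier G)) monomial_mat"
    by (rule faithful_rep_monomial_mat) auto
  then show ?thesis by blast
qed

lemma m_faithful_le: "faithful_rep G d \<rho> \<Longrightarrow> m_faithful G \<le> d"
  unfolding m_faithful_def by (rule Least_le) blast

lemma faithful_rep_m_faithful:
  "faithful_rep G d \<rho> \<Longrightarrow> \<exists>\<sigma>. faithful_rep G (m_faithful G) \<sigma>"
  unfolding m_faithful_def by (rule LeastI_ex) blast

lemma faithful_rep_restrict:
  assumes "faithful_rep (G\<lparr>carrier := H\<rparr>) d \<rho>" "H' \<subseteq> H"
  shows "faithful_rep (G\<lparr>carrier := H'\<rparr>) d \<rho>"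
  using assms unfolding faithful_rep_def hom_def by (auto intro: inj_on_subset)

section \<open>Joint eigencharacters of commuting matrices\<close>

text \<open>Joint eigencharacters are extended by \<open>0\<close> outside the index set, so that each one is
  determined by its values on it.\<close>
definition joint_eigenchars :: "('i \<Rightarrow> complex mat) \<Rightarrow> 'i set \<Rightarrow> nat \<Rightarrow> ('i \<Rightarrow> complex) set" where
  "joint_eigenchars M I d = {\<chi>. (\<exists>v\<in>carrier_vec d. v \<noteq> 0\<^sub>v d \<and> (\<forall>i\<in>I. M i *\<^sub>v v = \<chi> i \<cdot>\<^sub>v v))
      \<and> (\<forall>i. i \<notin> I \<longrightarrow> \<chi> i = 0)}"

lemma joint_eigenchars_eigenvector:
  assumes "\<chi> \<in> joint_eigenchars M I d"
  obtains v where "v \<in> carrier_vec d" "v \<noteq> 0\<^sub>v d" "\<And>i. i \<in> I \<Longrightarrow> M i *\<^sub>v v = \<chi> i \<cdot>\<^sub>v v"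
  using assms unfolding joint_eigenchars_def by blast

lemma joint_eigenchars_outside: "\<chi> \<in> joint_eigenchars M I d \<Longrightarrow> i \<notin> I \<Longrightarrow> \<chi> i = 0"
  unfolding joint_eigenchars_def by blast

lemma joint_eigenchars_intro:
  assumes "v \<in> carrier_vec d" "v \<noteq> 0\<^sub>v d" "\<forall>i\<in>I. \<exists>\<alpha>. M i *\<^sub>v v = \<alpha> \<cdot>\<^sub>v v"
  obtains \<chi> where "\<chi> \<in> joint_eigenchars M I d" "\<And>i. i \<in> I \<Longrightarrow> M i *\<^sub>v v = \<chi> i \<cdot>\<^sub>v v"
proof -
  define \<chi> where "\<chi> i = (if i \<in> I then SOME \<alpha>. M i *\<^sub>v v = \<alpha> \<cdot>\<^sub>v v else 0)" for i
  have eig: "M i *\<^sub>v v = \<chi> i \<cdot>\<^sub>v v" if "i \<in> I" for i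
    using someI_ex[OF assms(3)[rule_format, OF that]] that by (simp add: \<chi>_def)
  then have "\<chi> \<in> joint_eigenchars M I d"
    using assms(1,2) unfolding joint_eigenchars_def by (auto simp: \<chi>_def)
  then show thesis using that eig by blast
qed

lemma joint_eigenvectors_indep:
  fixes S :: "('i \<Rightarrow> complex) set" and v :: "('i \<Rightarrow> complex) \<Rightarrow> complex vec"
  assumes "finite S" "\<And>i. i \<in> I \<Longrightarrow> M i \<in> carrier_mat d d"
    and "\<And>\<chi>. \<chi> \<in> S \<Longrightarrow> v \<chi> \<in> carrier_vec d \<and> v \<chi> \<noteq> 0\<^sub>v d"
    and "\<And>\<chi> i. \<chi> \<in> S \<Longrightarrow> i \<in> I \<Longrightarrow> M i *\<^sub>v v \<chi> = \<chi> i \<cdot>\<^sub>v v \<chi>"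
    and "\<And>\<chi> \<mu>. \<chi> \<in> S \<Longrightarrow> \<mu> \<in> S \<Longrightarrow> \<chi> \<noteq> \<mu> \<Longrightarrow> \<exists>i\<in>I. \<chi> i \<noteq> \<mu> i"
    and "\<And>r. r < d \<Longrightarrow> (\<Sum>\<chi>\<in>S. c \<chi> * v \<chi> $ r) = 0"
  shows "\<forall>\<chi>\<in>S. c \<chi> = 0"
  using assms
proof (induction S arbitrary: c rule: finite_induct)
  case (insert \<mu> S)
  note M = insert.prems(1) and v = insert.prems(2) and rel = insert.prems(5)
  have shifted: "(\<Sum>\<chi>\<in>S. c \<chi> * (\<chi> i - \<mu> i) * v \<chi> $ r) = 0" if i: "i \<in> I" and r: "r < d" for i r
  proof -
    have zero: "vec d (\<lambda>r. \<Sum>\<chi>\<in>insert \<mu> S. c \<chi> * v \<chi> $ r) = 0\<^sub>v d"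
      by (rule eq_vecI) (simp_all only: rel index_vec index_zero_vec dim_vec)
    have "(\<Sum>\<chi>\<in>insert \<mu> S. c \<chi> * \<chi> i * v \<chi> $ r) = (\<Sum>\<chi>\<in>insert \<mu> S. c \<chi> * (M i *\<^sub>v v \<chi>) $ r)"
    proof (intro sum.cong refl)
      fix \<chi> assume \<chi>: "\<chi> \<in> insert \<mu> S"
      then have "dim_vec (v \<chi>) = d" using v by (simp add: carrier_vecD)
      then show "c \<chi> * \<chi> i * v \<chi> $ r = c \<chi> * (M i *\<^sub>v v \<chi>) $ r" using insert.prems(3)[OF \<chi> i] r by simp
    qed
    also have "\<dots> = (M i *\<^sub>v vec d (\<lambda>r. \<Sum>\<chi>\<in>insert \<mu> S. c \<chi> * v \<chi> $ r)) $ r"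
      by (rule mult_mat_vec_lincomb[OF M[OF i] _ r, symmetric]) (use v in auto)
    also have "\<dots> = 0" unfolding zero mult_mat_vec_zero_right[OF M[OF i]] using r by simp
    finally have "(\<Sum>\<chi>\<in>insert \<mu> S. c \<chi> * \<chi> i * v \<chi> $ r) - \<mu> i * (\<Sum>\<chi>\<in>insert \<mu> S. c \<chi> * v \<chi> $ r) = 0"
      using rel[OF r] by simp
    then show ?thesis
      using insert.hyps by (simp add: sum_distrib_left sum_subtractf[symmetric] algebra_simps)
  qed
  have "\<forall>\<chi>\<in>S. c \<chi> = 0"
  proof
    fix \<chi> assume \<chi>: "\<chi> \<in> S"
    then obtain i where i: "i \<in> I" "\<chi> i \<noteq> \<mu> i" using insert.prems(4)[of \<chi> \<mu>] insert.hyps by auto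
    have "\<forall>\<chi>\<in>S. c \<chi> * (\<chi> i - \<mu> i) = 0"
      by (rule insert.IH) (use insert.prems shifted[OF i(1)] in auto)
    then show "c \<chi> = 0" using \<chi> i by auto
  qed
  moreover obtain r where r: "r < d" "v \<mu> $ r \<noteq> 0" using nonzero_vec_index v by blast
  ultimately show ?case using rel[OF r(1)] insert.hyps by auto
qed simp

lemma card_le_dim_if_coords_indep:
  fixes V :: "complex vec set"
  assumes V: "V \<subseteq> carrier_vec d" "finite V"
    and indep: "\<And>c. (\<And>r. r < d \<Longrightarrow> (\<Sum>v\<in>V. c v * v $ r) = 0) \<Longrightarrow> \<forall>v\<in>V. c v = 0"
  shows "card V \<le> d"
proof -
  interpret vec_space "TYPE(complex)" d .
  have "lin_indpt V"
  proof
    assume "lin_dep V"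
    then obtain A a v where A: "finite A" "A \<subseteq> V" "lincomb a A = 0\<^sub>v d" "v \<in> A" "a v \<noteq> 0"
      unfolding lin_dep_def by auto
    define c where "c = (\<lambda>x. if x \<in> A then a x else 0)"
    have "(\<Sum>x\<in>V. c x * x $ r) = 0" if r: "r < d" for r
    proof -
      have "(\<Sum>x\<in>V. c x * x $ r) = (\<Sum>x\<in>A. a x * x $ r)"
        using A V by (auto simp: c_def intro!: sum.mono_neutral_cong_right)
      also have "\<dots> = lincomb a A $ r" using lincomb_index[OF r, of A a] A V by auto
      finally show ?thesis using A r by simp
    qed
    from indep[OF this] A show False unfolding c_def by (metis subsetD)
  qed
  then show ?thesis using li_le_dim(2)[OF fin_dim] V dim_is_n by simp
qed

definition joint_eigenvector :: "('i \<Rightarrow> complex mat) \<Rightarrow> 'i set \<Rightarrow> nat \<Rightarrow> ('i \<Rightarrow> complex) \<Rightarrow> complex vec" where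
  "joint_eigenvector M I d \<chi> = (SOME v. v \<in> carrier_vec d \<and> v \<noteq> 0\<^sub>v d \<and> (\<forall>i\<in>I. M i *\<^sub>v v = \<chi> i \<cdot>\<^sub>v v))"

lemma joint_eigenvector:
  assumes "\<chi> \<in> joint_eigenchars M I d"
  shows "joint_eigenvector M I d \<chi> \<in> carrier_vec d" "joint_eigenvector M I d \<chi> \<noteq> 0\<^sub>v d"
    "\<And>i. i \<in> I \<Longrightarrow> M i *\<^sub>v joint_eigenvector M I d \<chi> = \<chi> i \<cdot>\<^sub>v joint_eigenvector M I d \<chi>"
proof -
  have "\<exists>v. v \<in> carrier_vec d \<and> v \<noteq> 0\<^sub>v d \<and> (\<forall>i\<in>I. M i *\<^sub>v v = \<chi> i \<cdot>\<^sub>v v)"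
    using assms unfolding joint_eigenchars_def by blast
  from someI_ex[OF this] show "joint_eigenvector M I d \<chi> \<in> carrier_vec d" "joint_eigenvector M I d \<chi> \<noteq> 0\<^sub>v d"
    "\<And>i. i \<in> I \<Longrightarrow> M i *\<^sub>v joint_eigenvector M I d \<chi> = \<chi> i \<cdot>\<^sub>v joint_eigenvector M I d \<chi>"
    unfolding joint_eigenvector_def by blast+
qed

lemma joint_eigenchars_neq:
  assumes "\<chi> \<in> joint_eigenchars M I d" "\<mu> \<in> joint_eigenchars M I d" "\<chi> \<noteq> \<mu>"
  obtains i where "i \<in> I" "\<chi> i \<noteq> \<mu> i"
proof -
  obtain i where i: "\<chi> i \<noteq> \<mu> i" using assms(3) by (meson ext)
  have "i \<in> I"
  proof (rule ccontr)
    assume "i \<notin> I"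
    then show False
      using i joint_eigenchars_outside[OF assms(1)] joint_eigenchars_outside[OF assms(2)] by simp
  qed
  then show thesis using that i by blast
qed

lemma inj_on_joint_eigenvector: "inj_on (joint_eigenvector M I d) (joint_eigenchars M I d)"
proof
  fix \<chi> \<mu> assume \<chi>: "\<chi> \<in> joint_eigenchars M I d" and \<mu>: "\<mu> \<in> joint_eigenchars M I d"
    and eq: "joint_eigenvector M I d \<chi> = joint_eigenvector M I d \<mu>"
  show "\<chi> = \<mu>"
  proof (rule ccontr)
    assume "\<chi> \<noteq> \<mu>"
    then obtain i where "i \<in> I" "\<chi> i \<noteq> \<mu> i" using joint_eigenchars_neq[OF \<chi> \<mu>] by blast
    moreover have "\<chi> i \<cdot>\<^sub>v joint_eigenvector M I d \<chi> = \<mu> i \<cdot>\<^sub>v joint_eigenvector M I d \<chi>"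
      using joint_eigenvector(3)[OF \<chi> \<open>i \<in> I\<close>] joint_eigenvector(3)[OF \<mu> \<open>i \<in> I\<close>] eq by simp
    ultimately show False using smult_vec_right_cancel joint_eigenvector(1,2)[OF \<chi>] by blast
  qed
qed

lemma card_le_if_subset_joint_eigenchars:
  assumes M: "\<And>i. i \<in> I \<Longrightarrow> M i \<in> carrier_mat d d"
    and S: "S \<subseteq> joint_eigenchars M I d" "finite S"
  shows "card S \<le> d"
proof -
  let ?v = "joint_eigenvector M I d"
  have inj: "inj_on ?v S" using inj_on_subset[OF inj_on_joint_eigenvector S(1)] .
  have v: "?v \<chi> \<in> carrier_vec d \<and> ?v \<chi> \<noteq> 0\<^sub>v d" if "\<chi> \<in> S" for \<chi>
    using joint_eigenvector(1,2) that S(1) by blast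
  have "card (?v ` S) \<le> d"
  proof (rule card_le_dim_if_coords_indep)
    show "?v ` S \<subseteq> carrier_vec d" using v by blast
    show "finite (?v ` S)" using S(2) by simp
    fix c assume rel: "\<And>r. r < d \<Longrightarrow> (\<Sum>x\<in>?v ` S. c x * x $ r) = 0"
    have "\<forall>\<chi>\<in>S. c (?v \<chi>) = 0"
    proof (rule joint_eigenvectors_indep[OF S(2) M v])
      show "M i *\<^sub>v ?v \<chi> = \<chi> i \<cdot>\<^sub>v ?v \<chi>" if "\<chi> \<in> S" "i \<in> I" for \<chi> i
        using joint_eigenvector(3)[OF subsetD[OF S(1) that(1)] that(2)] .
      show "\<exists>i\<in>I. \<chi> i \<noteq> \<mu> i" if "\<chi> \<in> S" "\<mu> \<in> S" "\<chi> \<noteq> \<mu>" for \<chi> \<mu>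
        by (rule joint_eigenchars_neq[of \<chi> M I d \<mu>]) (use that S(1) in auto)
      show "(\<Sum>\<chi>\<in>S. c (?v \<chi>) * ?v \<chi> $ r) = 0" if "r < d" for r
        using rel[OF that] by (simp add: sum.reindex[OF inj])
    qed
    then show "\<forall>x\<in>?v ` S. c x = 0" by blast
  qed
  then show ?thesis using card_image[OF inj] by simp
qed

lemma joint_eigenchars_card_le:
  assumes "\<And>i. i \<in> I \<Longrightarrow> M i \<in> carrier_mat d d"
  shows "finite (joint_eigenchars M I d)" "card (joint_eigenchars M I d) \<le> d"
proof -
  show "finite (joint_eigenchars M I d)"
  proof (rule ccontr)
    assume "infinite (joint_eigenchars M I d)"
    then obtain S where S: "finite S" "card S = Suc d" "S \<subseteq> joint_eigenchars M I d"
      using infinite_arbitrarily_large by blast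
    then show False using card_le_if_subset_joint_eigenchars[where M = M and I = I, OF assms S(3,1)] by simp
  qed
  then show "card (joint_eigenchars M I d) \<le> d"
    using card_le_if_subset_joint_eigenchars[where M = M and I = I, OF assms, of "joint_eigenchars M I d"]
    by simp
qed

lemma sum_powers_root_of_unity:
  fixes z :: "'a::field"
  assumes "z ^ N = 1"
  shows "(\<Sum>s<N. z ^ s) = (if z = 1 then of_nat N else 0)"
  using assms by (simp add: geometric_sum)

lemma cis_power_eq_1_iff:
  fixes N i :: nat
  assumes "N > 0" "i < N"
  shows "cis (2 * pi / N) ^ i = 1 \<longleftrightarrow> i = 0"
proof -
  have "cis (2 * pi / N) ^ i = cis (2 * pi * real i / real N)" by (simp add: DeMoivre mult_ac)
  moreover have "cis (2 * pi * real i / real N) = cis (2 * pi * real 0 / real N) \<longleftrightarrow> i = 0"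
    using inj_on_eq_iff[OF bij_betw_imp_inj_on[OF bij_betw_roots_unity[OF assms(1)]], of i 0] assms
    by simp
  ultimately show ?thesis by simp
qed

lemma cis_2pi_div_power: "cis (2 * pi / N) ^ N = 1"
  by (cases "N = 0") (simp_all add: DeMoivre)

text \<open>If \<open>M\<^sup>N = 1\<close>, then \<open>eigen_proj M N s w\<close> is \<open>N\<close> times the component of \<open>w\<close> in the
  eigenspace of \<open>M\<close> for the eigenvalue \<open>\<omega>\<^sup>-\<^sup>s\<close>, where \<open>\<omega> = cis (2\<pi>/N)\<close>.\<close>
definition eigen_proj :: "complex mat \<Rightarrow> nat \<Rightarrow> nat \<Rightarrow> complex vec \<Rightarrow> complex vec" where
  "eigen_proj M N s w = vec (dim_vec w) (\<lambda>r. \<Sum>j<N. (cis (2 * pi / N) ^ s) ^ j * (M ^\<^sub>m j *\<^sub>v w) $ r)"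

lemma eigen_proj_carrier: "w \<in> carrier_vec d \<Longrightarrow> eigen_proj M N s w \<in> carrier_vec d"
  by (simp add: eigen_proj_def)

lemma eigen_proj_eigenvector:
  assumes M: "M \<in> carrier_mat d d" "M ^\<^sub>m N = 1\<^sub>m d" and w: "w \<in> carrier_vec d"
  shows "M *\<^sub>v eigen_proj M N s w = inverse (cis (2 * pi / N) ^ s) \<cdot>\<^sub>v eigen_proj M N s w"
proof (rule eq_vecI)
  fix r assume "r < dim_vec (inverse (cis (2 * pi / N) ^ s) \<cdot>\<^sub>v eigen_proj M N s w)"
  then have r: "r < d" using w by (simp add: eigen_proj_def)
  let ?z = "cis (2 * pi / N) ^ s" and ?X = "\<lambda>j. M ^\<^sub>m j *\<^sub>v w"
  have X: "?X j \<in> carrier_vec d" for j using M(1) w by (metis mult_mat_vec_carrier pow_carrier_mat)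
  have XS: "M *\<^sub>v ?X j = ?X (Suc j)" for j
  proof -
    have "M *\<^sub>v ?X j = (M * M ^\<^sub>m j) *\<^sub>v w"
      using assoc_mult_mat_vec[OF M(1) pow_carrier_mat[OF M(1)] w] by simp
    also have "M * M ^\<^sub>m j = M ^\<^sub>m j * M" by (rule mult_pow_mat_commute[OF M(1) M(1) refl])
    finally show ?thesis by simp
  qed
  have "?z * (M *\<^sub>v eigen_proj M N s w) $ r = ?z * (\<Sum>j<N. ?z ^ j * ?X (Suc j) $ r)"
    unfolding eigen_proj_def using mult_mat_vec_lincomb[OF M(1) X r] w XS by (simp add: carrier_vecD)
  also have "\<dots> = (\<Sum>j<N. ?z ^ Suc j * ?X (Suc j) $ r)"
    by (simp add: sum_distrib_left mult_ac)
  also have "\<dots> = (\<Sum>j<N. ?z ^ j * ?X j $ r)"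
  proof -
    let ?f = "\<lambda>j. ?z ^ j * ?X j $ r"
    have "cis (2 * pi / N) ^ N = 1" by (cases "N = 0") (simp_all add: DeMoivre)
    moreover have "?z ^ N = (cis (2 * pi / N) ^ N) ^ s" by (simp add: power_mult[symmetric] mult.commute)
    ultimately have "?z ^ N = 1" by simp
    then have "?f N = ?f 0" using M w by simp
    moreover have "(\<Sum>j<N. ?f (Suc j)) + ?f 0 = (\<Sum>j<N. ?f j) + ?f N"
      using sum.lessThan_Suc_shift[of ?f N] sum.lessThan_Suc[of ?f N] by (simp add: add.commute)
    ultimately show ?thesis by simp
  qed
  finally show "(M *\<^sub>v eigen_proj M N s w) $ r = (inverse ?z \<cdot>\<^sub>v eigen_proj M N s w) $ r"
    using r w by (simp add: eigen_proj_def field_simps)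
qed (use M w in \<open>simp add: eigen_proj_def\<close>)

lemma eigen_proj_commuting_eigenvector:
  assumes M: "M \<in> carrier_mat d d" and M': "M' \<in> carrier_mat d d" "M' * M = M * M'"
    and w: "w \<in> carrier_vec d" "M' *\<^sub>v w = \<alpha> \<cdot>\<^sub>v w"
  shows "M' *\<^sub>v eigen_proj M N s w = \<alpha> \<cdot>\<^sub>v eigen_proj M N s w"
proof (rule eq_vecI)
  fix r assume "r < dim_vec (\<alpha> \<cdot>\<^sub>v eigen_proj M N s w)"
  then have r: "r < d" using w by (simp add: eigen_proj_def)
  have X: "M ^\<^sub>m j *\<^sub>v w \<in> carrier_vec d" for j using M w by (metis mult_mat_vec_carrier pow_carrier_mat)
  have MX: "M' *\<^sub>v (M ^\<^sub>m j *\<^sub>v w) = \<alpha> \<cdot>\<^sub>v (M ^\<^sub>m j *\<^sub>v w)" for j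
  proof -
    have "M' *\<^sub>v (M ^\<^sub>m j *\<^sub>v w) = (M' * M ^\<^sub>m j) *\<^sub>v w"
      using assoc_mult_mat_vec[OF M'(1) pow_carrier_mat[OF M] w(1)] by simp
    also have "M' * M ^\<^sub>m j = M ^\<^sub>m j * M'" by (rule mult_pow_mat_commute[OF M'(1) M M'(2)])
    also have "(M ^\<^sub>m j * M') *\<^sub>v w = \<alpha> \<cdot>\<^sub>v (M ^\<^sub>m j *\<^sub>v w)"
      using assoc_mult_mat_vec[OF pow_carrier_mat[OF M] M'(1) w(1)]
        mult_mat_vec[OF pow_carrier_mat[OF M] w(1)]
        w(2) by simp
    finally show ?thesis .
  qed
  let ?c = "\<lambda>j. (cis (2 * pi / N) ^ s) ^ j"
  have "(M' *\<^sub>v eigen_proj M N s w) $ r = (\<Sum>j<N. ?c j * (M' *\<^sub>v (M ^\<^sub>m j *\<^sub>v w)) $ r)"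
    unfolding eigen_proj_def carrier_vecD[OF w(1)]
    by (rule mult_mat_vec_lincomb[where X = "\<lambda>j. M ^\<^sub>m j *\<^sub>v w", OF M'(1) X r])
  also have "\<dots> = \<alpha> * eigen_proj M N s w $ r"
    using carrier_vecD[OF X] r w(1) by (simp add: MX eigen_proj_def sum_distrib_left mult_ac)
  finally show "(M' *\<^sub>v eigen_proj M N s w) $ r = (\<alpha> \<cdot>\<^sub>v eigen_proj M N s w) $ r"
    using r w(1) by (simp add: eigen_proj_def)
qed (use M' w in \<open>simp add: eigen_proj_def\<close>)

lemma sum_eigen_proj:
  assumes M: "M \<in> carrier_mat d d" and "N > 0" and w: "w \<in> carrier_vec d" and r: "r < d"
  shows "(\<Sum>s<N. eigen_proj M N s w $ r) = of_nat N * w $ r"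
proof -
  let ?\<omega> = "cis (2 * pi / N)"
  have "(\<Sum>s<N. eigen_proj M N s w $ r) = (\<Sum>s<N. \<Sum>j<N. (?\<omega> ^ j) ^ s * (M ^\<^sub>m j *\<^sub>v w) $ r)"
    using w r by (simp add: eigen_proj_def power_mult[symmetric] mult.commute)
  also have "\<dots> = (\<Sum>j<N. (\<Sum>s<N. (?\<omega> ^ j) ^ s) * (M ^\<^sub>m j *\<^sub>v w) $ r)"
    by (subst sum.swap) (simp add: sum_distrib_right)
  also have "\<dots> = (\<Sum>j<N. if j = 0 then of_nat N * (M ^\<^sub>m j *\<^sub>v w) $ r else 0)"
  proof (intro sum.cong refl)
    fix j assume "j \<in> {..<N}"
    moreover have "(?\<omega> ^ j) ^ N = 1"
      by (metis cis_2pi_div_power power_mult mult.commute power_one)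
    ultimately show "(\<Sum>s<N. (?\<omega> ^ j) ^ s) * (M ^\<^sub>m j *\<^sub>v w) $ r
        = (if j = 0 then of_nat N * (M ^\<^sub>m j *\<^sub>v w) $ r else 0)"
      using assms(2) by (simp add: sum_powers_root_of_unity cis_power_eq_1_iff)
  qed
  also have "\<dots> = of_nat N * w $ r" using assms M w by (simp add: carrier_matD)
  finally show ?thesis .
qed

lemma eq_one_mat_if_fixes_vectors:
  fixes A :: "'a::semiring_1 mat"
  assumes A: "A \<in> carrier_mat d d" and fixed: "\<And>v. v \<in> carrier_vec d \<Longrightarrow> A *\<^sub>v v = v"
  shows "A = 1\<^sub>m d"
proof (rule eq_matI)
  fix i j assume "i < dim_row (1\<^sub>m d :: 'a mat)" "j < dim_col (1\<^sub>m d :: 'a mat)"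
  then have ij: "i < d" "j < d" by simp_all
  have "A $$ (i,j) = (A *\<^sub>v unit_vec d j) $ i" using A ij by simp
  also have "\<dots> = (1\<^sub>m d :: 'a mat) $$ (i,j)" using fixed[of "unit_vec d j"] ij by auto
  finally show "A $$ (i,j) = (1\<^sub>m d :: 'a mat) $$ (i,j)" .
qed (use A in simp_all)

text \<open>Diagonalising one more matrix \<open>M\<close> of finite order: every joint eigenvector of a family
  commuting with \<open>M\<close> is a sum of joint eigenvectors of the family extended by \<open>M\<close>.\<close>
lemma fixes_joint_eigenvectors_remove:
  fixes M :: "complex mat"
  assumes M: "M \<in> carrier_mat d d" "M ^\<^sub>m N = 1\<^sub>m d" "N > 0" and A: "A \<in> carrier_mat d d"
    and F: "\<And>M'. M' \<in> F \<Longrightarrow> M' \<in> carrier_mat d d \<and> M' * M = M * M'"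
    and fixed: "\<And>v. v \<in> carrier_vec d \<Longrightarrow> \<forall>M'\<in>insert M F. \<exists>\<alpha>. M' *\<^sub>v v = \<alpha> \<cdot>\<^sub>v v \<Longrightarrow> A *\<^sub>v v = v"
    and w: "w \<in> carrier_vec d" "\<forall>M'\<in>F. \<exists>\<alpha>. M' *\<^sub>v w = \<alpha> \<cdot>\<^sub>v w"
  shows "A *\<^sub>v w = w"
proof -
  let ?u = "\<lambda>s. eigen_proj M N s w"
  have u: "?u s \<in> carrier_vec d" for s using eigen_proj_carrier[OF w(1)] .
  have fixed_u: "A *\<^sub>v ?u s = ?u s" for s
  proof (rule fixed[OF u], intro ballI)
    fix M' assume "M' \<in> insert M F"
    then show "\<exists>\<alpha>. M' *\<^sub>v ?u s = \<alpha> \<cdot>\<^sub>v ?u s"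
    proof
      assume "M' = M"
      then show ?thesis using eigen_proj_eigenvector[OF M(1,2) w(1)] by blast
    next
      assume M': "M' \<in> F"
      then obtain \<alpha> where "M' *\<^sub>v w = \<alpha> \<cdot>\<^sub>v w" using w(2) by blast
      then show ?thesis using eigen_proj_commuting_eigenvector[OF M(1) _ _ w(1)] F[OF M'] by blast
    qed
  qed
  have w_sum: "w = vec d (\<lambda>r. \<Sum>s<N. (1 / of_nat N) * ?u s $ r)"
    using sum_eigen_proj[OF M(1,3) w(1)] M(3) w(1)
    by (intro eq_vecI) (simp_all add: sum_divide_distrib[symmetric])
  show "A *\<^sub>v w = w"
  proof (rule eq_vecI)
    fix r assume "r < dim_vec w"
    then have r: "r < d" using w(1) by simp
    have "(A *\<^sub>v w) $ r = (A *\<^sub>v vec d (\<lambda>r. \<Sum>s<N. (1 / of_nat N) * ?u s $ r)) $ r"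
      using w_sum by simp
    also have "\<dots> = (\<Sum>s<N. (1 / of_nat N) * (A *\<^sub>v ?u s) $ r)"
      by (rule mult_mat_vec_lincomb[OF A u r])
    also have "\<dots> = w $ r" using arg_cong[OF w_sum, of "\<lambda>x. x $ r"] r by (simp add: fixed_u)
    finally show "(A *\<^sub>v w) $ r = w $ r" .
  qed (use A w(1) in simp)
qed

text \<open>Commuting matrices of finite order are simultaneously diagonalisable.\<close>
lemma eq_one_if_fixes_joint_eigenvectors:
  fixes F :: "complex mat set"
  assumes F: "finite F" "F \<subseteq> carrier_mat d d" "\<And>M M'. M \<in> F \<Longrightarrow> M' \<in> F \<Longrightarrow> M * M' = M' * M"
    and order: "N > 0" "\<And>M. M \<in> F \<Longrightarrow> M ^\<^sub>m N = 1\<^sub>m d"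
    and A: "A \<in> carrier_mat d d"
    and fixed_eigenvectors: "\<And>v. v \<in> carrier_vec d \<Longrightarrow> \<forall>M\<in>F. \<exists>\<alpha>. M *\<^sub>v v = \<alpha> \<cdot>\<^sub>v v \<Longrightarrow> A *\<^sub>v v = v"
  shows "A = 1\<^sub>m d"
proof -
  have "A *\<^sub>v w = w" if "F' \<subseteq> F" "w \<in> carrier_vec d" "\<forall>M\<in>F - F'. \<exists>\<alpha>. M *\<^sub>v w = \<alpha> \<cdot>\<^sub>v w" for F' w
    using finite_subset[OF that(1) F(1)] that
  proof (induction F' arbitrary: w rule: finite_induct)
    case empty
    then show ?case using fixed_eigenvectors by simp
  next
    case (insert M F' w)
    have M: "M \<in> carrier_mat d d" "M ^\<^sub>m N = 1\<^sub>m d" using insert.prems(1) F(2) order(2) by auto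
    have F': "insert M (F - insert M F') = F - F'" using insert.hyps(2) insert.prems(1) by auto
    show ?case
    proof (rule fixes_joint_eigenvectors_remove[OF M order(1) A _ _ insert.prems(2)])
      show "M' \<in> carrier_mat d d \<and> M' * M = M * M'" if "M' \<in> F - insert M F'" for M'
        using that F(2,3) insert.prems(1) by auto
      show "A *\<^sub>v v = v" if "v \<in> carrier_vec d" "\<forall>M'\<in>insert M (F - insert M F'). \<exists>\<alpha>. M' *\<^sub>v v = \<alpha> \<cdot>\<^sub>v v" for v
        using insert.IH[of v] that insert.prems(1) unfolding F' by blast
      show "\<forall>M'\<in>F - insert M F'. \<exists>\<alpha>. M' *\<^sub>v w = \<alpha> \<cdot>\<^sub>v w" using insert.prems(3) by blast
    qed
  qed
  then show ?thesis using eq_one_mat_if_fixes_vectors[OF A] by blast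
qed

section \<open>Coordinates on the Heisenberg group\<close>

definition heis_mat :: "nat \<Rightarrow> (nat \<Rightarrow> 'a) \<Rightarrow> (nat \<Rightarrow> 'a) \<Rightarrow> 'a \<Rightarrow> 'a::comm_ring_1 mat" where
  "heis_mat k x y z = mat (k+2) (k+2) (\<lambda>(i,j). if i = j then 1 else if i = 0 \<and> j = k+1 then z
      else if i = 0 \<and> 1 \<le> j \<and> j \<le> k then x j else if j = k+1 \<and> 1 \<le> i \<and> i \<le> k then y i else 0)"

definition heis_dot :: "nat \<Rightarrow> (nat \<Rightarrow> 'a) \<Rightarrow> (nat \<Rightarrow> 'a) \<Rightarrow> 'a::comm_ring_1" where
  "heis_dot k x y = (\<Sum>j\<in>{1..k}. x j * y j)"

lemma heis_mat_carrier [simp]: "heis_mat k x y z \<in> carrier_mat (k+2) (k+2)"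
  by (simp add: heis_mat_def)

lemma heis_mat_dim [simp]: "dim_row (heis_mat k x y z) = k+2" "dim_col (heis_mat k x y z) = k+2"
  by (simp_all add: heis_mat_def)

lemma heis_mat_index:
  "i < k+2 \<Longrightarrow> j < k+2 \<Longrightarrow> heis_mat k x y z $$ (i,j) = (if i = j then 1 else if i = 0 \<and> j = k+1 then z
      else if i = 0 \<and> 1 \<le> j \<and> j \<le> k then x j else if j = k+1 \<and> 1 \<le> i \<and> i \<le> k then y i else 0)"
  by (simp add: heis_mat_def)

lemma heis_mat_corner: "heis_mat k x y z $$ (0,k+1) = z"
  by (simp add: heis_mat_index)

lemma heis_mat_in_Hei: "heis_mat k x y z \<in> Hei_set k"
  unfolding Hei_set_def carrier_U_mat by (auto simp: heis_mat_index)

lemma heis_mat_zero: "heis_mat k (\<lambda>_. 0) (\<lambda>_. 0) 0 = 1\<^sub>m (k+2)"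
  by (rule eq_matI) (auto simp: heis_mat_index)

lemma heis_mat_cong:
  assumes "\<And>j. j \<in> {1..k} \<Longrightarrow> x j = x' j" "\<And>i. i \<in> {1..k} \<Longrightarrow> y i = y' i"
  shows "heis_mat k x y z = heis_mat k x' y' z"
  by (rule eq_matI) (use assms in \<open>auto simp: heis_mat_index\<close>)

lemma heis_dot_zero [simp]: "heis_dot k (\<lambda>_. 0) y = 0" "heis_dot k x (\<lambda>_. 0) = 0"
  by (simp_all add: heis_dot_def)

lemma sum_lessThan_split_first_last:
  fixes f :: "nat \<Rightarrow> 'a::comm_monoid_add"
  shows "(\<Sum>l<k+2. f l) = f 0 + (\<Sum>l\<in>{1..k}. f l) + f (k+1)"
proof -
  have "{..<k+2} = insert 0 (insert (k+1) {1..k})" by auto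
  then show ?thesis by (simp add: add_ac)
qed

lemma sum_lessThan_split_first:
  fixes f :: "nat \<Rightarrow> 'a::comm_monoid_add"
  shows "(\<Sum>i<k+1. f i) = f 0 + (\<Sum>i\<in>{1..k}. f i)"
proof -
  have "{..<k+1} = insert 0 {1..k}" by auto
  then show ?thesis by simp
qed

lemma heis_mat_mult_middle:
  assumes i: "i < k+2" and j: "j < k+2"
  shows "(\<Sum>l\<in>{1..k}. heis_mat k x y z $$ (i,l) * heis_mat k x' y' z' $$ (l,j)) =
    (if i = 0 then (if 1 \<le> j \<and> j \<le> k then x j else if j = k+1 then heis_dot k x y' else 0)
     else if i \<le> k then (if i = j then 1 else if j = k+1 then y' i else 0) else 0)"
proof -
  let ?f = "\<lambda>l. (if i = l then 1 else if i = 0 then x l else 0) * (if l = j then 1 else if j = k+1 then y' l else 0)"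
  have "(\<Sum>l\<in>{1..k}. heis_mat k x y z $$ (i,l) * heis_mat k x' y' z' $$ (l,j)) = (\<Sum>l\<in>{1..k}. ?f l)"
    by (rule sum.cong[OF refl]) (use i j in \<open>auto simp: heis_mat_index\<close>)
  also have "\<dots> = (if i = 0 then (if 1 \<le> j \<and> j \<le> k then x j else if j = k+1 then heis_dot k x y' else 0)
     else if i \<le> k then (if i = j then 1 else if j = k+1 then y' i else 0) else 0)"
  proof (cases "i = 0")
    case True
    show ?thesis
    proof (cases "j = k+1")
      case True
      then show ?thesis using \<open>i = 0\<close> by (simp add: heis_dot_def)
    next
      case False
      have "(\<Sum>l\<in>{1..k}. ?f l) = (\<Sum>l\<in>{1..k}. if l = j then x l else 0)"
        by (rule sum.cong[OF refl]) (use \<open>i = 0\<close> False in auto)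
      then show ?thesis using \<open>i = 0\<close> False by (auto simp: sum.delta')
    qed
  next
    case False
    have "(\<Sum>l\<in>{1..k}. ?f l) =
        (\<Sum>l\<in>{1..k}. if i = l then (if l = j then 1 else if j = k+1 then y' l else 0) else 0)"
      by (rule sum.cong[OF refl]) (use False in auto)
    then show ?thesis using False by (simp add: sum.delta)
  qed
  finally show ?thesis .
qed

lemma heis_mat_mult:
  "heis_mat k x y z * heis_mat k x' y' z' =
    heis_mat k (\<lambda>j. x j + x' j) (\<lambda>i. y i + y' i) (z + z' + heis_dot k x y')"
proof (rule eq_matI)
  fix i j assume "i < dim_row (heis_mat k (\<lambda>j. x j + x' j) (\<lambda>i. y i + y' i) (z + z' + heis_dot k x y'))"
    and "j < dim_col (heis_mat k (\<lambda>j. x j + x' j) (\<lambda>i. y i + y' i) (z + z' + heis_dot k x y'))"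
  then have i: "i < k+2" and j: "j < k+2" by auto
  show "(heis_mat k x y z * heis_mat k x' y' z') $$ (i,j) =
      heis_mat k (\<lambda>j. x j + x' j) (\<lambda>i. y i + y' i) (z + z' + heis_dot k x y') $$ (i,j)"
    unfolding index_mult_mat_sum[OF heis_mat_carrier heis_mat_carrier i j] sum_lessThan_split_first_last
      heis_mat_mult_middle[OF i j]
    using i j by (auto simp: heis_mat_index)
qed auto

lemma heis_mat_conj_col:
  "heis_mat k (\<lambda>_. 0) y c * heis_mat k x (\<lambda>_. 0) 0 =
    heis_mat k x (\<lambda>_. 0) 0 * heis_mat k (\<lambda>_. 0) y (c - heis_dot k x y)"
  by (simp add: heis_mat_mult)

lemma heis_mat_last_col_sum:
  "(\<Sum>i<k+1. w i * heis_mat k x y c $$ (i,k+1)) = w 0 * c + (\<Sum>i\<in>{1..k}. w i * y i)"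
  unfolding sum_lessThan_split_first by (simp add: heis_mat_index)

section \<open>From a faithful representation of the Heisenberg group to one of \<open>G\<close>\<close>

locale heis_rep =
  fixes k d :: nat and \<rho> :: "'a::comm_ring_1 mat \<Rightarrow> complex mat"
  assumes finite_UNIV: "finite (UNIV :: 'a set)"
    and faithful: "faithful_rep (Hei_group k :: 'a mat monoid) d \<rho>"
begin

abbreviation col_elt :: "(nat \<Rightarrow> 'a) \<Rightarrow> 'a \<Rightarrow> 'a mat" where
  "col_elt y c \<equiv> heis_mat k (\<lambda>_. 0) y c"

abbreviation central :: "'a \<Rightarrow> 'a mat" where
  "central c \<equiv> col_elt (\<lambda>_. 0) c"

definition col_group :: "'a mat set" where
  "col_group = {col_elt y c | y c. True}"

abbreviation chars :: "('a mat \<Rightarrow> complex) set" where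
  "chars \<equiv> joint_eigenchars \<rho> col_group d"

lemma rho_carrier: "a \<in> Hei_set k \<Longrightarrow> \<rho> a \<in> carrier_mat d d"
  and rho_invertible: "a \<in> Hei_set k \<Longrightarrow> invertible_mat (\<rho> a)"
  and rho_mult: "a \<in> Hei_set k \<Longrightarrow> b \<in> Hei_set k \<Longrightarrow> \<rho> (a * b) = \<rho> a * \<rho> b"
  and rho_inj: "inj_on \<rho> (Hei_set k)"
  using faithful unfolding faithful_rep_def hom_def GL_mat_def Hei_group_def by (auto simp: U_mat_def)

lemma one_in_Hei: "1\<^sub>m (k+2) \<in> Hei_set k"
  using heis_mat_in_Hei[of k "\<lambda>_. 0" "\<lambda>_. 0" 0] unfolding heis_mat_zero .

lemma rho_one: "\<rho> (1\<^sub>m (k+2)) = 1\<^sub>m d"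
proof -
  define P where "P = \<rho> (1\<^sub>m (k+2))"
  have P: "P \<in> carrier_mat d d" unfolding P_def by (rule rho_carrier[OF one_in_Hei])
  have PP: "P * P = P" using rho_mult[OF one_in_Hei one_in_Hei] unfolding P_def by simp
  obtain Q where Q: "Q \<in> carrier_mat d d" "P * Q = 1\<^sub>m d"
    using invertible_mat_inverse[OF P rho_invertible[OF one_in_Hei, folded P_def]] by blast
  have "P = P * (P * Q)" using Q P by simp
  also have "\<dots> = (P * P) * Q" using assoc_mult_mat[OF P P Q(1)] by simp
  also have "\<dots> = 1\<^sub>m d" using PP Q(2) by simp
  finally show ?thesis unfolding P_def .
qed

lemma rho_mult_vec_eq_zero:
  assumes a: "a \<in> Hei_set k" and v: "v \<in> carrier_vec d" and z: "\<rho> a *\<^sub>v v = 0\<^sub>v d"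
  shows "v = 0\<^sub>v d"
proof -
  obtain Q where Q: "Q \<in> carrier_mat d d" "Q * \<rho> a = 1\<^sub>m d"
    using invertible_mat_inverse[OF rho_carrier[OF a] rho_invertible[OF a]] by blast
  have "v = (Q * \<rho> a) *\<^sub>v v" using Q(2) v by simp
  also have "\<dots> = Q *\<^sub>v 0\<^sub>v d" using assoc_mult_mat_vec[OF Q(1) rho_carrier[OF a] v] z by simp
  also have "\<dots> = 0\<^sub>v d" by (rule mult_mat_vec_zero_right[OF Q(1)])
  finally show ?thesis .
qed

lemma col_elt_mult: "col_elt y c * col_elt y' c' = col_elt (\<lambda>i. y i + y' i) (c + c')"
  using heis_mat_mult[of k "\<lambda>_. 0" y c "\<lambda>_. 0" y' c'] by simp

lemma col_elt_in_col_group: "col_elt y c \<in> col_group"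
  unfolding col_group_def by blast

lemma col_group_subset_Hei: "a \<in> col_group \<Longrightarrow> a \<in> Hei_set k"
  unfolding col_group_def using heis_mat_in_Hei by blast

lemma col_group_comm: "a \<in> col_group \<Longrightarrow> b \<in> col_group \<Longrightarrow> a * b = b * a"
  unfolding col_group_def by (auto simp: col_elt_mult add.commute)

lemma col_group_mult_closed: "a \<in> col_group \<Longrightarrow> b \<in> col_group \<Longrightarrow> a * b \<in> col_group"
  unfolding col_group_def using col_elt_mult by blast

lemma one_in_col_group: "1\<^sub>m (k+2) \<in> col_group"
  using col_elt_in_col_group[of "\<lambda>_. 0" 0] by (simp add: heis_mat_zero)

lemma finite_col_group: "finite col_group"
  using finite_carrier_mat[OF finite_UNIV, of "k+2" "k+2"]
  by (rule rev_finite_subset) (auto simp: col_group_def)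

lemma rho_col_elt_pow: "\<rho> (col_elt y c) ^\<^sub>m n = \<rho> (col_elt (\<lambda>l. of_nat n * y l) (of_nat n * c))"
proof (induction n)
  case 0
  then show ?case
    using carrier_matD(1)[OF rho_carrier[OF heis_mat_in_Hei]] rho_one by (simp add: heis_mat_zero)
next
  case (Suc n)
  then show ?case
    by (simp add: rho_mult[OF heis_mat_in_Hei heis_mat_in_Hei, symmetric] col_elt_mult algebra_simps)
qed

lemma rho_pow_CHAR: "a \<in> col_group \<Longrightarrow> \<rho> a ^\<^sub>m CHAR('a) = 1\<^sub>m d"
  unfolding col_group_def using rho_col_elt_pow rho_one by (auto simp: heis_mat_zero)

lemma chars_mult:
  assumes \<xi>: "\<xi> \<in> chars" and a: "a \<in> col_group" and b: "b \<in> col_group"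
  shows "\<xi> (a * b) = \<xi> a * \<xi> b"
proof -
  obtain v where v: "v \<in> carrier_vec d" "v \<noteq> 0\<^sub>v d" and eig: "\<And>a. a \<in> col_group \<Longrightarrow> \<rho> a *\<^sub>v v = \<xi> a \<cdot>\<^sub>v v"
    using joint_eigenchars_eigenvector[OF \<xi>] by blast
  note aH = col_group_subset_Hei[OF a] and bH = col_group_subset_Hei[OF b]
  have "\<xi> (a * b) \<cdot>\<^sub>v v = \<rho> a *\<^sub>v (\<rho> b *\<^sub>v v)"
    using eig[OF col_group_mult_closed[OF a b]] rho_mult[OF aH bH]
      assoc_mult_mat_vec[OF rho_carrier[OF aH] rho_carrier[OF bH] v(1)] by simp
  also have "\<dots> = (\<xi> a * \<xi> b) \<cdot>\<^sub>v v"
    using eig[OF a] eig[OF b] mult_mat_vec[OF rho_carrier[OF aH] v(1)]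
    by (simp add: smult_smult_assoc mult.commute)
  finally show ?thesis using smult_vec_right_cancel[OF v] by blast
qed

lemma chars_nonzero:
  assumes \<xi>: "\<xi> \<in> chars" and a: "a \<in> col_group"
  shows "\<xi> a \<noteq> 0"
proof
  assume "\<xi> a = 0"
  obtain v where v: "v \<in> carrier_vec d" "v \<noteq> 0\<^sub>v d" and eig: "\<And>a. a \<in> col_group \<Longrightarrow> \<rho> a *\<^sub>v v = \<xi> a \<cdot>\<^sub>v v"
    using joint_eigenchars_eigenvector[OF \<xi>] by blast
  then have "\<rho> a *\<^sub>v v = 0\<^sub>v d" using \<open>\<xi> a = 0\<close> eig[OF a] by auto
  then show False using rho_mult_vec_eq_zero[OF col_group_subset_Hei[OF a] v(1)] v(2) by blast
qed

lemma chars_one: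
  assumes \<xi>: "\<xi> \<in> chars"
  shows "\<xi> (1\<^sub>m (k+2)) = 1"
  using chars_mult[OF \<xi> one_in_col_group one_in_col_group] chars_nonzero[OF \<xi> one_in_col_group] by simp

lemma finite_chars: "finite chars"
  and card_chars_le: "card chars \<le> d"
  using joint_eigenchars_card_le[of col_group \<rho> d] rho_carrier col_group_subset_Hei by blast+

lemma chars_central_trivial_imp_zero:
  assumes trivial: "\<And>\<xi>. \<xi> \<in> chars \<Longrightarrow> \<xi> (central c) = 1"
  shows "c = 0"
proof -
  have "\<rho> (central c) = 1\<^sub>m d"
  proof (rule eq_one_if_fixes_joint_eigenvectors)
    show "finite (\<rho> ` col_group)" using finite_col_group by simp
    show "\<rho> ` col_group \<subseteq> carrier_mat d d" using rho_carrier col_group_subset_Hei by blast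
    show "M * M' = M' * M" if MM': "M \<in> \<rho> ` col_group" "M' \<in> \<rho> ` col_group" for M M'
    proof -
      obtain a b where ab: "a \<in> col_group" "b \<in> col_group" "M = \<rho> a" "M' = \<rho> b" using MM' by blast
      note H = col_group_subset_Hei[OF ab(1)] col_group_subset_Hei[OF ab(2)]
      have "\<rho> a * \<rho> b = \<rho> (b * a)" using rho_mult[OF H] col_group_comm[OF ab(1,2)] by simp
      also have "\<dots> = \<rho> b * \<rho> a" using rho_mult[OF H(2,1)] .
      finally show ?thesis using ab by simp
    qed
    show "CHAR('a) > 0" using finite_imp_CHAR_pos[OF finite_UNIV] .
    show "M ^\<^sub>m CHAR('a) = 1\<^sub>m d" if "M \<in> \<rho> ` col_group" for M using that rho_pow_CHAR by blast
    show "\<rho> (central c) \<in> carrier_mat d d" by (rule rho_carrier[OF heis_mat_in_Hei])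
    show "\<rho> (central c) *\<^sub>v v = v" if v: "v \<in> carrier_vec d" "\<forall>M\<in>\<rho> ` col_group. \<exists>\<alpha>. M *\<^sub>v v = \<alpha> \<cdot>\<^sub>v v" for v
    proof (cases "v = 0\<^sub>v d")
      case True
      then show ?thesis using mult_mat_vec_zero_right[OF rho_carrier[OF heis_mat_in_Hei]] by simp
    next
      case False
      obtain \<xi> where \<xi>: "\<xi> \<in> chars" "\<And>a. a \<in> col_group \<Longrightarrow> \<rho> a *\<^sub>v v = \<xi> a \<cdot>\<^sub>v v"
        using joint_eigenchars_intro[OF v(1) False, of col_group \<rho>] v(2) by blast
      then show ?thesis using trivial[OF \<xi>(1)] \<xi>(2)[OF col_elt_in_col_group] by simp
    qed
  qed
  then have "central c = 1\<^sub>m (k+2)"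
    using rho_one rho_inj heis_mat_in_Hei one_in_Hei by (metis inj_onD)
  then show "c = 0" using heis_mat_corner[of k "\<lambda>_. 0" "\<lambda>_. 0" c] by simp
qed

lemma chars_separate_central:
  assumes "\<And>\<xi>. \<xi> \<in> chars \<Longrightarrow> \<xi> (central a) = \<xi> (central b)"
  shows "a = b"
proof -
  have "\<xi> (central (a - b)) = 1" if \<xi>: "\<xi> \<in> chars" for \<xi>
  proof -
    have "\<xi> (central a) = \<xi> (central (a - b)) * \<xi> (central b)"
      using chars_mult[OF \<xi> col_elt_in_col_group[of "\<lambda>_. 0" "a - b"] col_elt_in_col_group[of "\<lambda>_. 0" b]]
      by (simp add: col_elt_mult)
    then show ?thesis using assms[OF \<xi>] chars_nonzero[OF \<xi> col_elt_in_col_group] by simp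
  qed
  then show ?thesis using chars_central_trivial_imp_zero[of "a - b"] by simp
qed

lemma rho_conj_eigenvector:
  fixes x y :: "nat \<Rightarrow> 'a"
  assumes v: "v \<in> carrier_vec d" "\<And>a. a \<in> col_group \<Longrightarrow> \<rho> a *\<^sub>v v = \<xi> a \<cdot>\<^sub>v v"
  defines "h \<equiv> heis_mat k x (\<lambda>_. 0) 0"
  shows "\<rho> (col_elt y c) *\<^sub>v (\<rho> h *\<^sub>v v) = \<xi> (col_elt y (c - heis_dot k x y)) \<cdot>\<^sub>v (\<rho> h *\<^sub>v v)"
proof -
  let ?a = "col_elt y c" and ?a' = "col_elt y (c - heis_dot k x y)"
  have H: "?a \<in> Hei_set k" "h \<in> Hei_set k" "?a' \<in> Hei_set k" unfolding h_def by (rule heis_mat_in_Hei)+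
  have "\<rho> ?a *\<^sub>v (\<rho> h *\<^sub>v v) = (\<rho> ?a * \<rho> h) *\<^sub>v v"
    using assoc_mult_mat_vec[OF rho_carrier[OF H(1)] rho_carrier[OF H(2)] v(1)] by simp
  also have "\<rho> ?a * \<rho> h = \<rho> h * \<rho> ?a'"
    unfolding h_def rho_mult[OF heis_mat_in_Hei heis_mat_in_Hei, symmetric] heis_mat_conj_col ..
  also have "(\<rho> h * \<rho> ?a') *\<^sub>v v = \<rho> h *\<^sub>v (\<xi> ?a' \<cdot>\<^sub>v v)"
    using assoc_mult_mat_vec[OF rho_carrier[OF H(2)] rho_carrier[OF H(3)] v(1)] v(2)[OF col_elt_in_col_group]
    by simp
  also have "\<dots> = \<xi> ?a' \<cdot>\<^sub>v (\<rho> h *\<^sub>v v)" by (rule mult_mat_vec[OF rho_carrier[OF H(2)] v(1)])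
  finally show ?thesis .
qed

definition normalized_rows :: "(nat \<Rightarrow> 'a) set" where
  "normalized_rows = {w. w 0 = 1 \<and> (\<forall>i>k. w i = 0)}"

text \<open>Characters of \<open>R^(k+1)\<close> are encoded as functions on \<^typ>\<open>nat \<Rightarrow> 'a\<close> that only
  depend on the arguments \<open>0..k\<close>.\<close>
definition row_char :: "('a mat \<Rightarrow> complex) \<Rightarrow> (nat \<Rightarrow> 'a) \<Rightarrow> (nat \<Rightarrow> 'a) \<Rightarrow> complex" where
  "row_char \<xi> w = (\<lambda>u. \<xi> (central (\<Sum>i<k+1. w i * u i)))"

definition row_chars :: "((nat \<Rightarrow> 'a) \<Rightarrow> complex) set" where
  "row_chars = {row_char \<xi> w | \<xi> w. \<xi> \<in> chars \<and> w \<in> normalized_rows}"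

lemma finite_row_chars: "finite row_chars"
proof -
  have "normalized_rows \<subseteq> {w. \<forall>i. i \<notin> {..k} \<longrightarrow> w i = 0}" by (auto simp: normalized_rows_def)
  then have "finite normalized_rows"
    using finite_set_of_finite_funs[of "{..k}" UNIV 0] finite_UNIV by (auto intro: finite_subset)
  moreover have "row_chars = (\<lambda>(\<xi>, w). row_char \<xi> w) ` (chars \<times> normalized_rows)"
    unfolding row_chars_def by auto
  ultimately show ?thesis using finite_chars by simp
qed

lemma row_chars_add:
  assumes "\<psi> \<in> row_chars"
  shows "\<psi> (\<lambda>i. u i + u' i) = \<psi> u * \<psi> u'"
proof -
  obtain \<xi> w where \<xi>: "\<xi> \<in> chars" and \<psi>: "\<psi> = row_char \<xi> w" using assms by (auto simp: row_chars_def)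
  have "central (\<Sum>i<k+1. w i * (u i + u' i)) = central (\<Sum>i<k+1. w i * u i) * central (\<Sum>i<k+1. w i * u' i)"
    by (simp add: col_elt_mult distrib_left sum.distrib)
  then show ?thesis
    unfolding \<psi> row_char_def by (simp only: chars_mult[OF \<xi> col_elt_in_col_group col_elt_in_col_group])
qed

lemma row_chars_cong:
  assumes "\<psi> \<in> row_chars" "\<And>i. i < k+1 \<Longrightarrow> u i = u' i"
  shows "\<psi> u = \<psi> u'"
proof -
  obtain \<xi> w where "\<psi> = row_char \<xi> w" using assms(1) by (auto simp: row_chars_def)
  moreover have "(\<Sum>i<k+1. w i * u i) = (\<Sum>i<k+1. w i * u' i)" using assms(2) by simp
  ultimately show ?thesis by (simp add: row_char_def)
qed

lemma row_chars_zero: "\<psi> \<in> row_chars \<Longrightarrow> \<psi> (\<lambda>_. 0) = 1"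
  unfolding row_chars_def row_char_def using chars_one by (auto simp: heis_mat_zero)

definition central_part :: "((nat \<Rightarrow> 'a) \<Rightarrow> complex) \<Rightarrow> 'a \<Rightarrow> complex" where
  "central_part \<psi> c = \<psi> (\<lambda>i. if i = 0 then c else 0)"

lemma central_part_row_char:
  assumes "w \<in> normalized_rows"
  shows "central_part (row_char \<xi> w) c = \<xi> (central c)"
  using assms sum_lessThan_split_first[of "\<lambda>i. w i * (if i = 0 then c else 0)" k]
  by (simp add: central_part_def row_char_def normalized_rows_def)

definition lift_central :: "('a \<Rightarrow> complex) \<Rightarrow> 'a mat \<Rightarrow> complex" where
  "lift_central \<chi> = (SOME \<xi>. \<xi> \<in> chars \<and> (\<forall>c. \<xi> (central c) = \<chi> c))"

lemma lift_central_row_chars: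
  assumes "\<psi> \<in> row_chars"
  shows "lift_central (central_part \<psi>) \<in> chars"
    "\<exists>\<xi>\<in>chars. \<exists>w\<in>normalized_rows. \<psi> = row_char \<xi> w \<and>
       (\<forall>c. lift_central (central_part \<psi>) (central c) = \<xi> (central c))"
proof -
  obtain \<xi> w where \<xi>: "\<xi> \<in> chars" and w: "w \<in> normalized_rows" and \<psi>: "\<psi> = row_char \<xi> w"
    using assms by (auto simp: row_chars_def)
  have "\<exists>\<xi>'. \<xi>' \<in> chars \<and> (\<forall>c. \<xi>' (central c) = central_part \<psi> c)"
    using \<xi> central_part_row_char[OF w] \<psi> by metis
  from someI_ex[OF this] show "lift_central (central_part \<psi>) \<in> chars"
    "\<exists>\<xi>\<in>chars. \<exists>w\<in>normalized_rows. \<psi> = row_char \<xi> w \<and>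
       (\<forall>c. lift_central (central_part \<psi>) (central c) = \<xi> (central c))"
    using \<xi> w \<psi> central_part_row_char[OF w] unfolding lift_central_def by auto
qed

definition last_col :: "'a mat \<Rightarrow> nat \<Rightarrow> 'a" where
  "last_col a = (\<lambda>i. a $$ (i,k+1))"

lemma last_col_heis_mat:
  "last_col (heis_mat k x y c) 0 = c" "i \<in> {1..k} \<Longrightarrow> last_col (heis_mat k x y c) i = y i"
  unfolding last_col_def by (simp_all add: heis_mat_index)

text \<open>Conjugating an eigenvector of a lift of the central part of \<open>\<psi> = row_char \<xi> w\<close> by
  \<^term>\<open>heis_mat k (\<lambda>j. - w j) (\<lambda>_. 0) 0\<close> multiplies its eigencharacter by \<open>\<psi>\<close>; so
  \<open>\<psi>\<close> can be read off from an eigencharacter of \<^term>\<open>col_group\<close>.\<close>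
definition twisted_char :: "((nat \<Rightarrow> 'a) \<Rightarrow> complex) \<Rightarrow> 'a mat \<Rightarrow> complex" where
  "twisted_char \<psi> a = (if a \<in> col_group
     then lift_central (central_part \<psi>) (col_elt (last_col a) 0) * \<psi> (last_col a) else 0)"

lemma twisted_char_in_chars:
  assumes \<psi>: "\<psi> \<in> row_chars"
  shows "twisted_char \<psi> \<in> chars"
proof -
  let ?\<xi>0 = "lift_central (central_part \<psi>)"
  obtain \<xi> w where \<xi>: "\<xi> \<in> chars" and w: "w \<in> normalized_rows" and \<psi>w: "\<psi> = row_char \<xi> w"
    and central: "\<And>c. ?\<xi>0 (central c) = \<xi> (central c)"
    using lift_central_row_chars[OF \<psi>] by blast
  have \<xi>0: "?\<xi>0 \<in> chars" using lift_central_row_chars(1)[OF \<psi>] .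
  obtain v0 where v0: "v0 \<in> carrier_vec d" "v0 \<noteq> 0\<^sub>v d" "\<And>a. a \<in> col_group \<Longrightarrow> \<rho> a *\<^sub>v v0 = ?\<xi>0 a \<cdot>\<^sub>v v0"
    using joint_eigenchars_eigenvector[OF \<xi>0] by blast
  define h where "h = heis_mat k (\<lambda>j. - w j) (\<lambda>_. 0) (0::'a)"
  have h: "h \<in> Hei_set k" unfolding h_def by (rule heis_mat_in_Hei)
  define v where "v = \<rho> h *\<^sub>v v0"
  have v: "v \<in> carrier_vec d" "v \<noteq> 0\<^sub>v d"
    using rho_mult_vec_eq_zero[OF h v0(1)] v0(1,2) rho_carrier[OF h] unfolding v_def by auto
  have "\<rho> a *\<^sub>v v = twisted_char \<psi> a \<cdot>\<^sub>v v" if a: "a \<in> col_group" for a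
  proof -
    obtain y c where a_def: "a = col_elt y c" using a unfolding col_group_def by blast
    have dot: "c - heis_dot k (\<lambda>j. - w j) y = c + heis_dot k w y" by (simp add: heis_dot_def sum_negf)
    have "?\<xi>0 (col_elt y (c + heis_dot k w y)) = ?\<xi>0 (col_elt y 0) * \<xi> (central (c + heis_dot k w y))"
      using chars_mult[OF \<xi>0 col_elt_in_col_group[of y 0]
          col_elt_in_col_group[of "\<lambda>_. 0" "c + heis_dot k w y"]]
      by (simp add: col_elt_mult central)
    also have "\<xi> (central (c + heis_dot k w y)) = \<psi> (last_col a)"
      using w heis_mat_last_col_sum[where w = w and x = "\<lambda>_. 0" and y = y and c = c]
      by (simp add: \<psi>w row_char_def a_def last_col_def normalized_rows_def heis_dot_def)
    also have "col_elt y 0 = col_elt (last_col a) 0"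
      by (rule heis_mat_cong) (simp_all add: a_def last_col_heis_mat)
    finally have "?\<xi>0 (col_elt y (c + heis_dot k w y)) = twisted_char \<psi> a"
      using a by (simp add: twisted_char_def)
    then show ?thesis
      using rho_conj_eigenvector[OF v0(1,3), where x = "\<lambda>j. - w j" and y = y and c = c]
      unfolding a_def v_def h_def dot by simp
  qed
  then show ?thesis
    using v unfolding joint_eigenchars_def by (auto simp: twisted_char_def)
qed

lemma twisted_char_central:
  assumes \<psi>: "\<psi> \<in> row_chars"
  shows "twisted_char \<psi> (central c) = central_part \<psi> c"
proof -
  have "col_elt (last_col (central c)) 0 = 1\<^sub>m (k+2)"
    unfolding heis_mat_zero[symmetric] by (rule heis_mat_cong) (simp_all add: last_col_heis_mat)
  moreover have "\<psi> (last_col (central c)) = central_part \<psi> c"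
    unfolding central_part_def
    by (rule row_chars_cong[OF \<psi>]) (auto simp: last_col_heis_mat(1) last_col_def heis_mat_index)
  ultimately show ?thesis
    using chars_one[OF lift_central_row_chars(1)[OF \<psi>]] col_elt_in_col_group
    by (simp add: twisted_char_def)
qed

lemma inj_on_twisted_char: "inj_on twisted_char row_chars"
proof
  fix \<psi>1 \<psi>2 assume \<psi>1: "\<psi>1 \<in> row_chars" and \<psi>2: "\<psi>2 \<in> row_chars" and eq: "twisted_char \<psi>1 = twisted_char \<psi>2"
  have central: "central_part \<psi>1 = central_part \<psi>2"
    using eq twisted_char_central[OF \<psi>1] twisted_char_central[OF \<psi>2] by (metis ext)
  show "\<psi>1 = \<psi>2"
  proof
    fix u :: "nat \<Rightarrow> 'a"
    let ?a = "col_elt u (u 0)"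
    have col: "last_col ?a i = u i" if "i < k+1" for i
      using that by (cases "i = 0") (auto simp: last_col_heis_mat)
    let ?L = "lift_central (central_part \<psi>1) (col_elt (last_col ?a) 0)"
    have "?L \<noteq> 0" by (rule chars_nonzero[OF lift_central_row_chars(1)[OF \<psi>1] col_elt_in_col_group])
    moreover have "?L * \<psi>1 (last_col ?a) = ?L * \<psi>2 (last_col ?a)"
      using fun_cong[OF eq, of ?a] central col_elt_in_col_group by (simp add: twisted_char_def)
    ultimately have "\<psi>1 (last_col ?a) = \<psi>2 (last_col ?a)" by simp
    then show "\<psi>1 u = \<psi>2 u" using row_chars_cong[OF \<psi>1 col] row_chars_cong[OF \<psi>2 col] by simp
  qed
qed

lemma card_row_chars_le: "card row_chars \<le> d"
proof -
  have "card row_chars \<le> card chars"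
    using card_inj_on_le[OF inj_on_twisted_char _ finite_chars] twisted_char_in_chars by blast
  then show ?thesis using card_chars_le by simp
qed

definition row_act :: "((nat \<Rightarrow> 'a) \<Rightarrow> complex) \<Rightarrow> 'a mat \<Rightarrow> (nat \<Rightarrow> 'a) \<Rightarrow> complex" where
  "row_act \<psi> g = (\<lambda>u. \<psi> (\<lambda>i. \<Sum>j<k+1. g $$ (i,j) * u j))"

definition row_cocycle :: "((nat \<Rightarrow> 'a) \<Rightarrow> complex) \<Rightarrow> 'a mat \<Rightarrow> complex" where
  "row_cocycle \<psi> g = \<psi> (last_col g)"

lemma row_act_closed:
  assumes \<psi>: "\<psi> \<in> row_chars" and g: "g \<in> carrier (U_mat (k+2))"
  shows "row_act \<psi> g \<in> row_chars"
proof -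
  obtain \<xi> w where \<xi>: "\<xi> \<in> chars" and w: "w \<in> normalized_rows" and \<psi>w: "\<psi> = row_char \<xi> w"
    using \<psi> unfolding row_chars_def by blast
  define wg where "wg j = (if j < k+1 then (\<Sum>i<k+1. w i * g $$ (i,j)) else 0)" for j
  have "(\<Sum>i\<in>{1..k}. w i * g $$ (i,0)) = 0" using U_matD(3)[OF g] by (intro sum.neutral) auto
  then have "wg 0 = 1"
    using U_matD(2)[OF g, of 0] w sum_lessThan_split_first[of "\<lambda>i. w i * g $$ (i,0)" k]
    by (simp add: wg_def normalized_rows_def)
  then have wg: "wg \<in> normalized_rows" by (auto simp: normalized_rows_def wg_def)
  have "(\<Sum>i<k+1. w i * (\<Sum>j<k+1. g $$ (i,j) * u j)) = (\<Sum>j<k+1. wg j * u j)" for u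
  proof -
    have "(\<Sum>i<k+1. w i * (\<Sum>j<k+1. g $$ (i,j) * u j)) = (\<Sum>i<k+1. \<Sum>j<k+1. w i * g $$ (i,j) * u j)"
      by (simp only: sum_distrib_left mult.assoc)
    also have "\<dots> = (\<Sum>j<k+1. \<Sum>i<k+1. w i * g $$ (i,j) * u j)" by (rule sum.swap)
    also have "\<dots> = (\<Sum>j<k+1. wg j * u j)"
      by (rule sum.cong[OF refl]) (simp add: wg_def sum_distrib_right del: sum.lessThan_Suc)
    finally show ?thesis .
  qed
  then have "row_act \<psi> g = row_char \<xi> wg" by (simp add: row_act_def \<psi>w row_char_def del: sum.lessThan_Suc)
  then show ?thesis unfolding row_chars_def using \<xi> wg by blast
qed

lemma row_act_mult:
  assumes \<psi>: "\<psi> \<in> row_chars" and g: "g \<in> carrier (U_mat (k+2))" and h: "h \<in> carrier (U_mat (k+2))"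
  shows "row_act \<psi> (g * h) = row_act (row_act \<psi> g) h"
proof
  fix u :: "nat \<Rightarrow> 'a"
  have "(\<Sum>j<k+1. (g * h) $$ (i,j) * u j) = (\<Sum>l<k+1. g $$ (i,l) * (\<Sum>j<k+1. h $$ (l,j) * u j))"
    if i: "i < k+1" for i
  proof -
    have "(\<Sum>j<k+1. (g * h) $$ (i,j) * u j) = (\<Sum>j<k+1. (\<Sum>l<k+1. g $$ (i,l) * h $$ (l,j)) * u j)"
      using U_mat_mult_index_block[of g "k+1" h i] g h i by (intro sum.cong) auto
    also have "\<dots> = (\<Sum>j<k+1. \<Sum>l<k+1. g $$ (i,l) * h $$ (l,j) * u j)"
      by (simp only: sum_distrib_right)
    also have "\<dots> = (\<Sum>l<k+1. \<Sum>j<k+1. g $$ (i,l) * h $$ (l,j) * u j)" by (rule sum.swap)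
    finally show ?thesis by (simp only: sum_distrib_left mult.assoc)
  qed
  then show "row_act \<psi> (g * h) u = row_act (row_act \<psi> g) h u"
    unfolding row_act_def by (intro row_chars_cong[OF \<psi>]) simp
qed

lemma row_act_one:
  assumes \<psi>: "\<psi> \<in> row_chars"
  shows "row_act \<psi> (1\<^sub>m (k+2)) = \<psi>"
proof
  fix u :: "nat \<Rightarrow> 'a"
  have "(\<Sum>j<k+1. (1\<^sub>m (k+2) :: 'a mat) $$ (i,j) * u j) = u i" if "i < k+1" for i
  proof -
    have "(\<Sum>j<k+1. (1\<^sub>m (k+2) :: 'a mat) $$ (i,j) * u j) = (\<Sum>j<k+1. if i = j then u j else 0)"
      using that by (intro sum.cong) auto
    then show ?thesis using that by simp
  qed
  then show "row_act \<psi> (1\<^sub>m (k+2)) u = \<psi> u"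
    unfolding row_act_def by (intro row_chars_cong[OF \<psi>]) simp
qed

lemma row_cocycle_mult:
  assumes \<psi>: "\<psi> \<in> row_chars" and g: "g \<in> carrier (U_mat (k+2))" and h: "h \<in> carrier (U_mat (k+2))"
  shows "row_cocycle \<psi> (g * h) = row_cocycle \<psi> g * row_cocycle (row_act \<psi> g) h"
proof -
  have "row_cocycle \<psi> g * row_cocycle (row_act \<psi> g) h =
      \<psi> (\<lambda>i. last_col g i + (\<Sum>j<k+1. g $$ (i,j) * last_col h j))"
    unfolding row_cocycle_def row_act_def by (rule row_chars_add[OF \<psi>, symmetric])
  also have "\<dots> = \<psi> (last_col (g * h))"
    using U_mat_mult_index_block[of g "k+1" h _ "k+1"] g h
    by (intro row_chars_cong[OF \<psi>]) (simp add: last_col_def add.commute)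
  finally show ?thesis unfolding row_cocycle_def by simp
qed

lemma row_cocycle_one: "\<psi> \<in> row_chars \<Longrightarrow> row_cocycle \<psi> (1\<^sub>m (k+2)) = 1"
  using row_chars_cong[of \<psi> "last_col (1\<^sub>m (k+2))" "\<lambda>_. 0"] row_chars_zero
  by (simp add: row_cocycle_def last_col_def)

lemma normalized_rows_separate:
  assumes "\<And>w. w \<in> normalized_rows \<Longrightarrow> (\<Sum>i<k+1. w i * u i) = (\<Sum>i<k+1. w i * u' i)"
    and "i < k+1"
  shows "u i = u' i"
proof -
  define e where "e m = (\<lambda>i. if i = 0 \<or> i = m then 1 else (0::'a))" for m :: nat
  have e: "e m \<in> normalized_rows" if "m \<le> k" for m using that by (auto simp: normalized_rows_def e_def)
  have sum_e: "(\<Sum>i<k+1. e m i * v i) = v 0 + (if m \<in> {1..k} then v m else 0)" for m v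
  proof -
    have "(\<Sum>i\<in>{1..k}. e m i * v i) = (\<Sum>i\<in>{1..k}. if i = m then v i else 0)"
      by (intro sum.cong) (auto simp: e_def)
    then show ?thesis unfolding sum_lessThan_split_first by (simp add: e_def)
  qed
  have "u 0 = u' 0" using assms(1)[OF e[of 0]] unfolding sum_e by simp
  moreover have "u 0 + u i = u' 0 + u' i" if "i \<in> {1..k}"
    using assms(1)[OF e[of i]] that unfolding sum_e by simp
  ultimately show ?thesis using assms(2) by (cases "i = 0") auto
qed

lemma row_chars_separate:
  assumes g: "g \<in> carrier (U_mat (k+2))" and h: "h \<in> carrier (U_mat (k+2))"
    and same: "\<forall>\<psi>\<in>row_chars. row_act \<psi> g = row_act \<psi> h \<and> row_cocycle \<psi> g = row_cocycle \<psi> h"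
  shows "g = h"
proof (rule U_mat_eqI[of g "k+1" h])
  fix i j assume i: "i < k+1" and j: "j < Suc (k+1)"
  show "g $$ (i,j) = h $$ (i,j)"
  proof (rule normalized_rows_separate[OF _ i])
    fix w assume w: "w \<in> normalized_rows"
    show "(\<Sum>i<k+1. w i * g $$ (i,j)) = (\<Sum>i<k+1. w i * h $$ (i,j))"
    proof (rule chars_separate_central)
      fix \<xi> assume \<xi>: "\<xi> \<in> chars"
      then have \<psi>: "row_char \<xi> w \<in> row_chars" using w unfolding row_chars_def by blast
      have "row_char \<xi> w (\<lambda>i. g $$ (i,j)) = row_char \<xi> w (\<lambda>i. h $$ (i,j))"
      proof (cases "j = k+1")
        case True
        then show ?thesis using same \<psi> by (simp add: row_cocycle_def last_col_def)
      next
        case False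
        let ?e = "\<lambda>l. if l = j then (1::'a) else 0"
        have "row_act (row_char \<xi> w) m ?e = row_char \<xi> w (\<lambda>i. m $$ (i,j))" for m
          using False j by (simp add: row_act_def if_distrib cong: if_cong)
        then show ?thesis using same \<psi> by metis
      qed
      then show "\<xi> (central (\<Sum>i<k+1. w i * g $$ (i,j))) = \<xi> (central (\<Sum>i<k+1. w i * h $$ (i,j)))"
        by (simp add: row_char_def del: sum.lessThan_Suc)
    qed
  qed
qed (use g h in simp_all)

lemma faithful_rep_U_subgroup:
  assumes H: "subgroup H (U_mat (k+2) :: 'a mat monoid)"
  shows "\<exists>\<sigma>. faithful_rep ((U_mat (k+2))\<lparr>carrier := H\<rparr>) (card row_chars) \<sigma>"
proof -
  let ?G = "(U_mat (k+2) :: 'a mat monoid)\<lparr>carrier := H\<rparr>"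
  have HU: "H \<subseteq> carrier (U_mat (k+2))" using subgroup.subset[OF H] .
  interpret G: group ?G by (rule subgroup.subgroup_is_group[OF H group_U_mat[OF finite_UNIV]])
  interpret monomial_action ?G row_chars row_act row_cocycle
  proof unfold_locales
    fix \<psi> g h assume \<psi>: "\<psi> \<in> row_chars" and g: "g \<in> carrier ?G" and h: "h \<in> carrier ?G"
    then have gh: "g \<in> carrier (U_mat (k+2))" "h \<in> carrier (U_mat (k+2))" using HU by auto
    show "row_act \<psi> g \<in> row_chars" by (rule row_act_closed[OF \<psi> gh(1)])
    show "row_act \<psi> (g \<otimes>\<^bsub>?G\<^esub> h) = row_act (row_act \<psi> g) h"
      using row_act_mult[OF \<psi> gh] by (simp add: U_mat_mult)
    show "row_cocycle \<psi> (g \<otimes>\<^bsub>?G\<^esub> h) = row_cocycle \<psi> g * row_cocycle (row_act \<psi> g) h"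
      using row_cocycle_mult[OF \<psi> gh] by (simp add: U_mat_mult)
  qed (use finite_row_chars row_act_one row_cocycle_one in \<open>simp_all add: U_mat_one\<close>)
  have "faithful_rep ?G (card row_chars) monomial_mat"
    by (rule faithful_rep_monomial_mat) (use row_chars_separate HU in auto)
  then show ?thesis by blast
qed

lemma m_faithful_U_subgroup_le:
  "subgroup H (U_mat (k+2) :: 'a mat monoid) \<Longrightarrow> m_faithful ((U_mat (k+2))\<lparr>carrier := H\<rparr>) \<le> d"
  using faithful_rep_U_subgroup m_faithful_le card_row_chars_le by (meson order_trans)

end

theorem theorem1p2:
  fixes k :: nat and H :: "('a::comm_ring_1) mat set"
  assumes "finite_chain_ring TYPE('a)"
    and "(2::'a) dvd 1"
    and "k \<ge> 1"
    and "subgroup H (U_mat (k+2) :: 'a mat monoid)"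
    and "Hei_set k \<subseteq> H"
  shows "m_faithful ((U_mat (k+2)) \<lparr> carrier := H \<rparr>) = m_faithful (Hei_group k :: 'a mat monoid)"
proof -
  let ?G = "(U_mat (k+2) :: 'a mat monoid)\<lparr>carrier := H\<rparr>" and ?Hei = "Hei_group k :: 'a mat monoid"
  have fin: "finite (UNIV :: 'a set)" using assms(1) unfolding finite_chain_ring_def by blast
  have "group ?G" by (rule subgroup.subgroup_is_group[OF assms(4) group_U_mat[OF fin]])
  moreover have "finite H"
    using finite_carrier_U_mat[OF fin] subgroup.subset[OF assms(4)] by (rule rev_finite_subset)
  ultimately obtain \<rho> where "faithful_rep ?G (m_faithful ?G) \<rho>"
    using group.faithful_rep_exists faithful_rep_m_faithful by fastforce
  then have "faithful_rep ?Hei (m_faithful ?G) \<rho>"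
    unfolding Hei_group_def using faithful_rep_restrict assms(5) by blast
  then obtain \<sigma> where \<sigma>: "faithful_rep ?Hei (m_faithful ?Hei) \<sigma>" and "m_faithful ?Hei \<le> m_faithful ?G"
    using faithful_rep_m_faithful m_faithful_le by blast
  moreover have "m_faithful ?G \<le> m_faithful ?Hei"
    using heis_rep.m_faithful_U_subgroup_le[OF _ assms(4)] fin \<sigma> unfolding heis_rep_def by blast
  ultimately show ?thesis by simp
qed

end
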